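(* Let $\Xi$ be a nonzero finite measure on $\Delta$, let $\gamma$ and $w$ be as in the context. (i) If $a=0$ and $\mu:=\int_\Delta|u|\,\nu(\mathrm du)<\infty$, then $w(x,t)\sim xe^{\mu t}$ as $x\to\infty$, for each $t\ge0$. (ii) If the limit $\kappa:=\lim_{x\to\infty}x\gamma''(x)$ exists and is finite, then for every $t\ge0$ there is a function $L_t^{\#}:[1,\infty)\to(0,\infty)$, slowly varying at $\infty$, with $w(x,t)=x^{e^{\kappa t}}L_t^{\#}(x)$ for all $x\ge1$. (iii) Suppose the limit $\kappa:=\lim_{x\to\infty}x\gamma''(x)$ exists and is finite, and let $\gamma_1:(1,\infty)\to(0,\infty)$ be continuous with $(\gamma(x)-\gamma_1(x))/x\to0$ as $x\to\infty$. Then for all $t\ge0$ and $x>1$ there exists a unique $w_1(x,t)\ge x$ with $\int_x^{w_1(x,t)}\frac{\mathrm du}{\gamma_1(u)}=t$ (and set $w_1(1,t):=1$). If moreover, in the case $\kappa=0$, the map $x\mapsto\gamma_1(x)/x$ is nondecreasing on $(1,\infty)$, then $w(x,t)\sim w_1(x,t)$ as $x\to\infty$ for each $t\ge0$.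
   Context: Let $\Delta:=\{u=(u_1,u_2,\ldots):u_1\ge u_2\ge\cdots\ge0,\ \sum_{i\ge1}u_i\le1\}$, and for $u\in\Delta$ write $|u|:=\sum_{i\ge1}u_i$, $(u,u):=\sum_{i\ge1}u_i^2$, and $0:=(0,0,\ldots)$. Let $\Xi$ be a finite measure on $\Delta$, $a:=\Xi(\{0\})$, $\Xi_0:=\Xi-a\delta_0$, and $\nu(\mathrm du):=\Xi_0(\mathrm du)/(u,u)$ on $\Delta\setminus\{0\}$. Define $\gamma(x):=a\frac{x(x-1)}{2}+\int_\Delta\sum_{i\ge1}((1-u_i)^x-1+xu_i)\,\nu(\mathrm du)$, $x\ge0$ ($C^\infty$ on $(0,\infty)$, positive on $(1,\infty)$). In each of the situations (i)–(iii), $\int_2^\infty\frac{\mathrm du}{\gamma(u)}=\infty$, and $w:[1,\infty)\times[0,\infty)\to[1,\infty)$ is defined by $w(1,t):=1$ and, for $x>1$, $t\ge0$, $w(x,t)$ is the unique number in $[x,\infty)$ with $\int_x^{w(x,t)}\frac{\mathrm du}{\gamma(u)}=t$. *)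

theory Defs
  imports "HOL-Analysis.Analysis" "HOL-Library.Landau_Symbols"
begin

text \<open>The simplex Delta of ranked sequences, as a subset of nat => real
  (carrying the product topology / its Borel sigma-algebra).\<close>
definition Delta :: "(nat \<Rightarrow> real) set" where
  "Delta = {u. (\<forall>i. u (Suc i) \<le> u i) \<and> (\<forall>i. 0 \<le> u i) \<and> summable u \<and> (\<Sum>i. u i) \<le> 1}"

definition sabs :: "(nat \<Rightarrow> real) \<Rightarrow> real" where
  "sabs u = (\<Sum>i. u i)"

definition sip :: "(nat \<Rightarrow> real) \<Rightarrow> real" where
  "sip u = (\<Sum>i. (u i)^2)"

text \<open>b to the real power x, with the convention 0^0 = 1.\<close>
definition pw :: "real \<Rightarrow> real \<Rightarrow> real" where
  "pw b x = (if b = 0 then (if x = 0 then 1 else 0) else b powr x)"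

text \<open>a = Xi({0})\<close>
definition atom0 :: "(nat \<Rightarrow> real) measure \<Rightarrow> real" where
  "atom0 Xi = measure Xi {\<lambda>_. 0}"

text \<open>gamma(x) = a x(x-1)/2 + integral over Delta\{0} of the sum, against
  nu(du) = Xi_0(du)/(u,u).\<close>
definition gamma :: "(nat \<Rightarrow> real) measure \<Rightarrow> real \<Rightarrow> real" where
  "gamma Xi x = atom0 Xi * x * (x - 1) / 2
     + (\<integral>u. (if u = (\<lambda>_. 0) then 0 else (\<Sum>i. pw (1 - u i) x - 1 + x * u i) / sip u) \<partial>Xi)"

definition mu :: "(nat \<Rightarrow> real) measure \<Rightarrow> ennreal" where
  "mu Xi = (\<integral>\<^sup>+u. ennreal (if u = (\<lambda>_. 0) then 0 else sabs u / sip u) \<partial>Xi)"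

definition wfun :: "(real \<Rightarrow> real) \<Rightarrow> real \<Rightarrow> real \<Rightarrow> real" where
  "wfun g x t = (if x = 1 then 1 else
      (THE y. x \<le> y \<and> ((\<lambda>u. 1 / g u) has_integral t) {x..y}))"

definition slowly_varying :: "(real \<Rightarrow> real) \<Rightarrow> bool" where
  "slowly_varying L \<longleftrightarrow> (\<forall>x\<ge>1. 0 < L x) \<and> set_borel_measurable borel {1..} L \<and>
     (\<forall>l>0. ((\<lambda>x. L (l * x) / L x) \<longlongrightarrow> 1) at_top)"

end

theory Submission
  imports Defs
begin

text \<open>Differentiating under the integral shows that \<open>\<gamma>\<close> is \<open>C\<^sup>2\<close> with \<open>x \<gamma>'(x) \<ge> \<gamma>(x)\<close>, so
  \<open>q(x) = \<gamma>(x)/x\<close> is nondecreasing. Let \<open>T(a, b) = \<integral>\<^sub>a\<^sup>b du/\<gamma>(u)\<close> be the travel time of the flow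
  \<open>\<partial>\<^sub>t w = \<gamma>(w)\<close>, so that \<open>T(x, w(x, t)) = t\<close>. Writing \<open>1/u = q(u) / \<gamma>(u)\<close> gives
  \<open>q(a) T(a, b) \<le> ln b - ln a \<le> q(b) T(a, b)\<close>, and integrating \<open>(ln q)' = (u \<gamma>' - \<gamma>) / (u \<gamma>)\<close> gives
  \<open>ln q(b) - ln q(a) \<approx> \<kappa> T(a, b)\<close> once \<open>(x \<gamma>'(x) - \<gamma>(x)) / x \<rightarrow> \<kappa>\<close>, which follows from
  \<open>x \<gamma>''(x) \<rightarrow> \<kappa>\<close> by l'H\^opital's rule.

  (i) \<open>q\<close> increases to \<open>\<mu>\<close>, so \<open>ln w(x, t) - ln x\<close>, squeezed between \<open>q(x) t\<close> and \<open>\<mu> t\<close>, tends to \<open>\<mu> t\<close>.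

  (ii) The flow preserves travel times: \<open>T(x, l x) = T(w(x, t), w(l x, t))\<close>. Hence
  \<open>ln w(l x, t) - ln w(x, t) \<approx> q(w(x, t)) T(x, l x) \<approx> e\<^bsup>\<kappa> t\<^esup> q(x) T(x, l x) \<approx> e\<^bsup>\<kappa> t\<^esup> ln l\<close>,
  which is the slow variation of \<open>w(x, t) / x\<^bsup>e\<^bsup>\<kappa> t\<^esup>\<^esup>\<close>.

  (iii) Replacing \<open>\<gamma>\<close> by \<open>\<gamma>\<^sub>1 = \<gamma> + o(x)\<close> changes the travel time over \<open>[x, w\<^sub>1(x, t)]\<close> by
  \<open>o(1/q(x))\<close>, while \<open>ln w(x, \<cdot>)\<close> is Lipschitz with constant \<open>O(q(x))\<close>; hence \<open>ln w - ln w\<^sub>1 \<rightarrow> 0\<close>.\<close>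

section \<open>The kernel of \<open>\<gamma>\<close> and its derivatives\<close>

definition kernel0 :: "real \<Rightarrow> real \<Rightarrow> real" where
  "kernel0 x s = pw (1 - s) x - 1 + x * s"

definition kernel1 :: "real \<Rightarrow> real \<Rightarrow> real" where
  "kernel1 x s = pw (1 - s) x * ln (1 - s) + s"

definition kernel2 :: "real \<Rightarrow> real \<Rightarrow> real" where
  "kernel2 x s = pw (1 - s) x * (ln (1 - s))\<^sup>2"

lemma pw_nonneg: "0 \<le> b \<Longrightarrow> 0 \<le> pw b x"
  by (simp add: pw_def)

lemma pw_le_one: "0 \<le> b \<Longrightarrow> b \<le> 1 \<Longrightarrow> 0 \<le> x \<Longrightarrow> pw b x \<le> 1"
  by (auto simp: pw_def powr_le1)

lemma pw_one_minus_has_real_derivative: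
  assumes s: "0 \<le> s" "s \<le> 1" and x: "x > 0"
  shows "((\<lambda>y. pw (1 - s) y) has_real_derivative pw (1 - s) x * ln (1 - s)) (at x)"
proof (cases "s = 1")
  case True
  have "((\<lambda>_. 0::real) has_real_derivative 0) (at x)" by simp
  then have "((\<lambda>y. pw (1 - s) y) has_real_derivative 0) (at x)"
    by (rule has_field_derivative_transform_within_open[where S="{0<..}"])
       (use x True in \<open>auto simp: pw_def\<close>)
  then show ?thesis using True x by (simp add: pw_def)
next
  case False
  then have b: "1 - s > 0" using s by auto
  have "((\<lambda>y. exp (y * ln (1 - s))) has_real_derivative exp (x * ln (1 - s)) * ln (1 - s)) (at x)"
    by (auto intro!: derivative_eq_intros)
  then show ?thesis using b by (simp add: pw_def powr_def mult.commute)
qed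

lemma kernel0_has_real_derivative:
  "0 \<le> s \<Longrightarrow> s \<le> 1 \<Longrightarrow> x > 0 \<Longrightarrow> ((\<lambda>y. kernel0 y s) has_real_derivative kernel1 x s) (at x)"
  unfolding kernel0_def kernel1_def
  by (auto intro!: derivative_eq_intros pw_one_minus_has_real_derivative)

lemma kernel1_has_real_derivative:
  "0 \<le> s \<Longrightarrow> s \<le> 1 \<Longrightarrow> x > 0 \<Longrightarrow> ((\<lambda>y. kernel1 y s) has_real_derivative kernel2 x s) (at x)"
  unfolding kernel1_def kernel2_def
  by (auto intro!: derivative_eq_intros pw_one_minus_has_real_derivative simp: power2_eq_square)

lemma kernel0_measurable [measurable]: "kernel0 x \<in> borel_measurable borel"
  unfolding kernel0_def pw_def by measurable

lemma kernel1_measurable [measurable]: "kernel1 x \<in> borel_measurable borel"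
  unfolding kernel1_def pw_def by measurable

lemma kernel2_measurable [measurable]: "kernel2 x \<in> borel_measurable borel"
  unfolding kernel2_def pw_def by measurable

lemma one_minus_mult_ln_one_minus_ge:
  fixes s :: real
  assumes "0 \<le> s" "s \<le> 1"
  shows "- s \<le> (1 - s) * ln (1 - s)"
proof (cases "s = 1")
  case False
  then have y: "1 - s > 0" using assms by auto
  have "ln (1 / (1 - s)) \<le> 1 / (1 - s) - 1" using ln_le_minus_one[of "1/(1-s)"] y by simp
  then have "- ln (1 - s) \<le> s / (1 - s)" using y by (simp add: ln_div field_simps)
  then have "(1 - s) * (- ln (1 - s)) \<le> s" using y by (simp add: field_simps)
  then show ?thesis by simp
qed simp

lemma kernel0_at_one: "s \<le> 1 \<Longrightarrow> kernel0 1 s = 0"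
  by (cases "1 - s = 0") (auto simp: kernel0_def pw_def)

lemma kernel1_nonneg:
  fixes s x :: real
  assumes "0 \<le> s" "s \<le> 1" "1 \<le> x"
  shows "0 \<le> kernel1 x s"
proof (cases "s = 1")
  case True then show ?thesis using assms by (simp add: kernel1_def pw_def)
next
  case False
  then have y: "0 < 1 - s" "1 - s \<le> 1" using assms by auto
  have "(1 - s) powr x \<le> 1 - s" using powr_le_one_le[OF y assms(3)] .
  moreover have "ln (1 - s) \<le> 0" using y by simp
  ultimately have "(1 - s) * ln (1 - s) \<le> (1 - s) powr x * ln (1 - s)"
    by (simp add: mult_right_mono_neg)
  then show ?thesis using one_minus_mult_ln_one_minus_ge[OF assms(1,2)] y
    by (simp add: kernel1_def pw_def)
qed

lemma kernel1_pos:
  fixes s x :: real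
  assumes "0 < s" "s \<le> 1" "1 < x"
  shows "0 < kernel1 x s"
proof (cases "s = 1")
  case True then show ?thesis using assms by (simp add: kernel1_def pw_def)
next
  case False
  then have y: "0 < 1 - s" "1 - s < 1" using assms by auto
  have "(1 - s) powr x < (1 - s) powr 1" by (rule powr_less_mono') (use y assms in auto)
  moreover have "ln (1 - s) < 0" using y by simp
  ultimately have "(1 - s) * ln (1 - s) < (1 - s) powr x * ln (1 - s)"
    using y by (simp add: mult_strict_right_mono_neg)
  moreover have "kernel1 x s = (1 - s) powr x * ln (1 - s) + s"
    using y by (simp add: kernel1_def pw_def)
  ultimately show ?thesis using one_minus_mult_ln_one_minus_ge[of s] assms by linarith
qed

lemma kernel0_nonneg:
  fixes s x :: real
  assumes "0 \<le> s" "s \<le> 1" "1 \<le> x"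
  shows "0 \<le> kernel0 x s"
proof -
  have "kernel0 1 s \<le> kernel0 x s"
  proof (rule DERIV_nonneg_imp_nondecreasing[OF assms(3)])
    fix y assume "1 \<le> y" "y \<le> x"
    then show "\<exists>d. ((\<lambda>y. kernel0 y s) has_real_derivative d) (at y) \<and> 0 \<le> d"
      using kernel0_has_real_derivative[of s y] kernel1_nonneg[of s y] assms by auto
  qed
  then show ?thesis using assms by (simp add: kernel0_at_one)
qed

lemma kernel0_pos:
  fixes s x :: real
  assumes "0 < s" "s \<le> 1" "1 < x"
  shows "0 < kernel0 x s"
proof -
  have "kernel0 1 s < kernel0 x s"
  proof (rule DERIV_pos_imp_increasing_open[OF assms(3)])
    fix y assume "1 < y" "y < x"
    then show "\<exists>d. ((\<lambda>y. kernel0 y s) has_real_derivative d) (at y) \<and> 0 < d"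
      using kernel0_has_real_derivative[of s y] kernel1_pos[of s y] assms by auto
  next
    show "continuous_on {1..x} (\<lambda>y. kernel0 y s)"
    proof (rule DERIV_atLeastAtMost_imp_continuous_on)
      fix y assume "1 \<le> y" "y \<le> x"
      then show "\<exists>d. ((\<lambda>y. kernel0 y s) has_real_derivative d) (at y)"
        using kernel0_has_real_derivative[of s y] assms by auto
    qed
  qed
  then show ?thesis using assms by (simp add: kernel0_at_one)
qed

lemma kernel0_le_linear:
  fixes s x :: real
  assumes "0 \<le> s" "s \<le> 1" "0 \<le> x"
  shows "kernel0 x s \<le> x * s"
  using pw_le_one[of "1 - s" x] assms by (simp add: kernel0_def)

lemma kernel1_le:
  fixes s x :: real
  assumes "0 \<le> s" "s \<le> 1" "1 \<le> x"
  shows "kernel1 x s \<le> x * s\<^sup>2"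
proof (cases "s = 1")
  case True then show ?thesis using assms by (simp add: kernel1_def pw_def)
next
  case False
  then have s: "s < 1" using assms by auto
  have "ln (1 - s) \<le> - s" using ln_le_minus_one[of "1 - s"] s by simp
  then have "pw (1 - s) x * ln (1 - s) \<le> pw (1 - s) x * (- s)"
    by (rule mult_left_mono) (use s pw_nonneg in auto)
  then have "kernel1 x s \<le> s * (1 - pw (1 - s) x)" by (simp add: kernel1_def algebra_simps)
  also have "\<dots> \<le> s * (x * s)"
    using kernel0_nonneg[OF assms] assms by (intro mult_left_mono) (auto simp: kernel0_def)
  finally show ?thesis by (simp add: power2_eq_square algebra_simps)
qed

lemma kernel0_le:
  fixes s x :: real
  assumes "0 \<le> s" "s \<le> 1" "1 \<le> x"
  shows "kernel0 x s \<le> x\<^sup>2 * s\<^sup>2"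
proof -
  have "1\<^sup>2 * s\<^sup>2 - kernel0 1 s \<le> x\<^sup>2 * s\<^sup>2 - kernel0 x s"
  proof (rule DERIV_nonneg_imp_nondecreasing[OF assms(3)])
    fix y assume y: "1 \<le> y" "y \<le> x"
    have "((\<lambda>y. y\<^sup>2 * s\<^sup>2 - kernel0 y s) has_real_derivative 2 * y * s\<^sup>2 - kernel1 y s) (at y)"
      using kernel0_has_real_derivative[of s y] assms y by (auto intro!: derivative_eq_intros)
    moreover have "0 \<le> 2 * y * s\<^sup>2 - kernel1 y s"
      using kernel1_le[of s y] assms y by (smt (verit) mult_right_mono zero_le_power2)
    ultimately show "\<exists>d. ((\<lambda>y. y\<^sup>2 * s\<^sup>2 - kernel0 y s) has_real_derivative d) (at y) \<and> 0 \<le> d"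
      by blast
  qed
  then have "s\<^sup>2 \<le> x\<^sup>2 * s\<^sup>2 - kernel0 x s" using assms by (simp add: kernel0_at_one)
  then show ?thesis using zero_le_power2[of s] by linarith
qed

lemma kernel2_le:
  fixes s x :: real
  assumes "0 \<le> s" "s \<le> 1" "2 \<le> x"
  shows "kernel2 x s \<le> s\<^sup>2"
proof (cases "s = 1")
  case True then show ?thesis using assms by (simp add: kernel2_def pw_def)
next
  case False
  then have y: "0 < 1 - s" "1 - s \<le> 1" using assms by auto
  have "(1 - s) powr x \<le> (1 - s) powr 2" by (rule powr_mono') (use y assms in auto)
  also have "\<dots> = (1 - s)\<^sup>2" using y by (simp add: powr_realpow)
  finally have "(1 - s) powr x * (ln (1 - s))\<^sup>2 \<le> ((1 - s) * ln (1 - s))\<^sup>2"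
    by (simp add: power_mult_distrib mult_right_mono)
  moreover have "\<bar>(1 - s) * ln (1 - s)\<bar> \<le> s"
    using one_minus_mult_ln_one_minus_ge[OF assms(1,2)] mult_nonneg_nonpos[of "1 - s" "ln (1 - s)"] y
    by auto
  then have "((1 - s) * ln (1 - s))\<^sup>2 \<le> s\<^sup>2"
    by (metis abs_le_square_iff abs_of_nonneg assms(1))
  ultimately show ?thesis using y by (simp add: kernel2_def pw_def)
qed

text \<open>With \<open>z = (1 - s)\<^sup>x\<close> this is \<open>1 - z + z ln z \<ge> 0\<close>; it makes \<open>x \<gamma>'(x) - \<gamma>(x)\<close> nonnegative.\<close>
lemma mult_kernel1_ge_kernel0:
  fixes s x :: real
  assumes "0 \<le> s" "s \<le> 1"
  shows "kernel0 x s \<le> x * kernel1 x s"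
proof (cases "s = 1")
  case True then show ?thesis using assms by (simp add: kernel0_def kernel1_def pw_def)
next
  case False
  then have y: "0 < 1 - s" using assms by auto
  define z where "z = (1 - s) powr x"
  have z: "z > 0" using y by (simp add: z_def)
  have "ln (1 / z) \<le> 1 / z - 1" using ln_le_minus_one[of "1/z"] z by simp
  then have "z * (- ln z) \<le> z * (1 / z - 1)" using z by (intro mult_left_mono) (auto simp: ln_div)
  moreover have "z * (1 / z - 1) = 1 - z" using z by (simp add: field_simps)
  ultimately have "0 \<le> 1 - z + z * ln z" by linarith
  moreover have "x * kernel1 x s - kernel0 x s = 1 - z + z * ln z"
    using y by (simp add: kernel0_def kernel1_def pw_def z_def ln_powr algebra_simps)
  ultimately show ?thesis by simp
qed

lemma kernel0_bounds:
  "0 \<le> s \<Longrightarrow> s \<le> 1 \<Longrightarrow> 1 \<le> x \<Longrightarrow> \<bar>kernel0 x s\<bar> \<le> x\<^sup>2 * s\<^sup>2"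
  using kernel0_nonneg[of s x] kernel0_le[of s x] by simp

lemma kernel1_bounds:
  "0 \<le> s \<Longrightarrow> s \<le> 1 \<Longrightarrow> 1 \<le> x \<Longrightarrow> x \<le> c \<Longrightarrow> \<bar>kernel1 x s\<bar> \<le> c * s\<^sup>2"
  using kernel1_nonneg[of s x] kernel1_le[of s x] by (smt (verit) mult_right_mono zero_le_power2)

lemma kernel2_bounds:
  "0 \<le> s \<Longrightarrow> s \<le> 1 \<Longrightarrow> 2 \<le> x \<Longrightarrow> \<bar>kernel2 x s\<bar> \<le> 1 * s\<^sup>2"
  using kernel2_le[of s x] by (simp add: kernel2_def pw_nonneg)

lemma kernel0_bounds_linear:
  "0 \<le> s \<Longrightarrow> s \<le> 1 \<Longrightarrow> 1 \<le> x \<Longrightarrow> \<bar>kernel0 x s\<bar> \<le> x\<^sup>2 * s"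
proof -
  assume a: "0 \<le> s" "s \<le> 1" "1 \<le> x"
  have "x * s \<le> x\<^sup>2 * s"
    using mult_right_mono[of 1 x x] a by (intro mult_right_mono) (auto simp: power2_eq_square)
  then show ?thesis using kernel0_nonneg[of s x] kernel0_le_linear[of s x] a by auto
qed

lemma kernel1_bounds_linear:
  "0 \<le> s \<Longrightarrow> s \<le> 1 \<Longrightarrow> 1 \<le> x \<Longrightarrow> \<bar>kernel1 x s\<bar> \<le> x * s"
proof -
  assume a: "0 \<le> s" "s \<le> 1" "1 \<le> x"
  have "x * s\<^sup>2 \<le> x * s" using a by (intro mult_left_mono) (auto simp: power2_eq_square mult_left_le)
  then show ?thesis using kernel1_bounds[of s x x] a by linarith
qed

lemma kernel0_div_tendsto:
  fixes s :: real
  assumes s: "0 \<le> s" "s \<le> 1"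
  shows "((\<lambda>x. kernel0 x s / x) \<longlongrightarrow> s) at_top"
proof -
  have b: "- 1 \<le> pw (1 - s) x - 1" "pw (1 - s) x - 1 \<le> 1" if "0 \<le> x" for x
    using pw_nonneg[of "1 - s" x] pw_le_one[of "1 - s" x] s that by auto
  have "((\<lambda>x. (pw (1 - s) x - 1) / x) \<longlongrightarrow> 0) at_top"
  proof (rule tendsto_sandwich[of "\<lambda>x. - 1 / x" _ _ "\<lambda>x. 1 / x"])
    show "\<forall>\<^sub>F x in at_top. - 1 / x \<le> (pw (1 - s) x - 1) / x"
      using eventually_gt_at_top[of 0]
    proof eventually_elim
      case (elim x)
      show ?case by (rule divide_right_mono) (use b elim in auto)
    qed
    show "\<forall>\<^sub>F x in at_top. (pw (1 - s) x - 1) / x \<le> 1 / x"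
      using eventually_gt_at_top[of 0] by eventually_elim (use b in \<open>auto intro!: divide_right_mono\<close>)
    have "((\<lambda>x::real. 1 / x) \<longlongrightarrow> 0) at_top"
      by (intro tendsto_divide_0[OF tendsto_const] filterlim_at_top_imp_at_infinity filterlim_ident)
    then show "((\<lambda>x::real. 1 / x) \<longlongrightarrow> 0) at_top" "((\<lambda>x::real. - 1 / x) \<longlongrightarrow> 0) at_top"
      using tendsto_minus[of "\<lambda>x::real. 1 / x" 0] by auto
  qed
  then have "((\<lambda>x. (pw (1 - s) x - 1) / x + s) \<longlongrightarrow> 0 + s) at_top"
    by (intro tendsto_add tendsto_const)
  moreover have "\<forall>\<^sub>F x in at_top. (pw (1 - s) x - 1) / x + s = kernel0 x s / x"
    using eventually_gt_at_top[of 0] by eventually_elim (simp add: kernel0_def field_simps)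
  ultimately show ?thesis by (simp add: tendsto_cong)
qed

section \<open>Sums over the ranked simplex\<close>

text \<open>\<open>\<integral> nu_sum k d\<Xi>\<close> is \<open>\<integral>\<^sub>\<Delta> \<Sum>\<^sub>i k(u\<^sub>i) \<nu>(du)\<close>; the atom of \<open>\<Xi>\<close> at \<open>0\<close> does not contribute.\<close>
definition nu_sum :: "(real \<Rightarrow> real) \<Rightarrow> (nat \<Rightarrow> real) \<Rightarrow> real" where
  "nu_sum k u = (if u = (\<lambda>_. 0) then 0 else (\<Sum>i. k (u i)) / sip u)"

lemma coordinate_borel_measurable [measurable]: "(\<lambda>u::nat \<Rightarrow> real. u i) \<in> borel_measurable borel"
  by (rule borel_measurable_continuous_onI) simp

lemma nu_sum_borel_measurable:
  assumes [measurable]: "k \<in> borel_measurable borel"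
  shows "nu_sum k \<in> borel_measurable borel"
proof -
  have "nu_sum k = (\<lambda>u. if (\<forall>i. u i = 0) then 0 else (\<Sum>i. k (u i)) / (\<Sum>i. (u i)\<^sup>2))"
    by (auto simp: nu_sum_def sip_def fun_eq_iff)
  then show ?thesis by simp
qed

lemma nu_sum_measurable:
  assumes "k \<in> borel_measurable borel" "sets M = sets (restrict_space borel Delta)"
  shows "nu_sum k \<in> borel_measurable M"
proof -
  have "nu_sum k \<in> borel_measurable (restrict_space borel Delta)"
    by (rule measurable_restrict_space1[OF nu_sum_borel_measurable[OF assms(1)]])
  then show ?thesis using measurable_cong_sets[where N="borel :: real measure", OF assms(2) refl] by simp
qed

lemma Delta_memD:
  assumes "u \<in> Delta"
  shows "0 \<le> u i" "u i \<le> 1" "summable u" "summable (\<lambda>i. (u i)\<^sup>2)"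
proof -
  show s: "summable u" and n: "0 \<le> u i" using assms by (auto simp: Delta_def)
  have le1: "u j \<le> 1" for j
    using sum_le_suminf[OF s, of "{j}"] assms by (auto simp: Delta_def)
  then show "u i \<le> 1" .
  show "summable (\<lambda>i. (u i)\<^sup>2)"
    by (rule summable_comparison_test'[OF s])
       (use le1 assms in \<open>auto simp: Delta_def power2_eq_square mult_left_le\<close>)
qed

lemma sip_pos: "u \<in> Delta \<Longrightarrow> u \<noteq> (\<lambda>_. 0) \<Longrightarrow> 0 < sip u"
  using suminf_pos2[OF Delta_memD(4)] by (fastforce simp: sip_def)

lemma Delta_summable_linear:
  assumes u: "u \<in> Delta" and k: "\<And>s. 0 \<le> s \<Longrightarrow> s \<le> 1 \<Longrightarrow> \<bar>k s\<bar> \<le> C * s"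
  shows "summable (\<lambda>i. k (u i))"
  by (rule summable_comparison_test'[OF summable_mult[OF Delta_memD(3)[OF u], of C]])
     (use k Delta_memD[OF u] in auto)

lemma Delta_suminf_quadratic_bound:
  assumes u: "u \<in> Delta" and k: "\<And>s. 0 \<le> s \<Longrightarrow> s \<le> 1 \<Longrightarrow> \<bar>k s\<bar> \<le> C * s\<^sup>2"
  shows "summable (\<lambda>i. k (u i))" "\<bar>\<Sum>i. k (u i)\<bar> \<le> C * sip u"
proof -
  have sq: "summable (\<lambda>i. C * (u i)\<^sup>2)" using Delta_memD(4)[OF u] by (rule summable_mult)
  have b: "\<bar>k (u i)\<bar> \<le> C * (u i)\<^sup>2" for i using k Delta_memD[OF u] by auto
  show s: "summable (\<lambda>i. k (u i))" by (rule summable_comparison_test'[OF sq]) (use b in auto)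
  have "\<bar>\<Sum>i. k (u i)\<bar> \<le> (\<Sum>i. \<bar>k (u i)\<bar>)"
    by (rule summable_rabs[OF summable_comparison_test'[OF sq]]) (use b in auto)
  also have "\<dots> \<le> (\<Sum>i. C * (u i)\<^sup>2)"
    by (rule suminf_le[OF b summable_comparison_test'[OF sq] sq]) (use b in auto)
  also have "\<dots> = C * sip u" unfolding sip_def by (rule suminf_mult[OF Delta_memD(4)[OF u]])
  finally show "\<bar>\<Sum>i. k (u i)\<bar> \<le> C * sip u" .
qed

lemma abs_nu_sum_le:
  assumes u: "u \<in> Delta" and k: "\<And>s. 0 \<le> s \<Longrightarrow> s \<le> 1 \<Longrightarrow> \<bar>k s\<bar> \<le> C * s\<^sup>2" and C: "0 \<le> C"
  shows "\<bar>nu_sum k u\<bar> \<le> C"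
proof (cases "u = (\<lambda>_. 0)")
  case False
  then show ?thesis
    using Delta_suminf_quadratic_bound(2)[OF u k] sip_pos[OF u False]
    by (simp add: nu_sum_def abs_divide divide_le_eq)
qed (simp add: nu_sum_def C)

lemma nu_sum_mono:
  assumes u: "u \<in> Delta" and k1: "\<And>s. 0 \<le> s \<Longrightarrow> s \<le> 1 \<Longrightarrow> \<bar>k1 s\<bar> \<le> C * s"
    and k2: "\<And>s. 0 \<le> s \<Longrightarrow> s \<le> 1 \<Longrightarrow> \<bar>k2 s\<bar> \<le> C * s"
    and le: "\<And>s. 0 \<le> s \<Longrightarrow> s \<le> 1 \<Longrightarrow> k1 s \<le> k2 s"
  shows "nu_sum k1 u \<le> nu_sum k2 u"
proof (cases "u = (\<lambda>_. 0)")
  case False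
  have "(\<Sum>i. k1 (u i)) \<le> (\<Sum>i. k2 (u i))"
    by (rule suminf_le[OF _ Delta_summable_linear[OF u k1] Delta_summable_linear[OF u k2]])
       (use le Delta_memD[OF u] in auto)
  then show ?thesis using sip_pos[OF u False] False by (simp add: nu_sum_def divide_right_mono)
qed (simp add: nu_sum_def)

lemma nu_sum_nonneg:
  assumes u: "u \<in> Delta" and k: "\<And>s. 0 \<le> s \<Longrightarrow> s \<le> 1 \<Longrightarrow> \<bar>k s\<bar> \<le> C * s"
    and nonneg: "\<And>s. 0 \<le> s \<Longrightarrow> s \<le> 1 \<Longrightarrow> 0 \<le> k s"
  shows "0 \<le> nu_sum k u"
proof -
  have "nu_sum (\<lambda>_. 0) u \<le> nu_sum k u"
    by (rule nu_sum_mono[OF u _ k nonneg]) (use k[of 1] in auto)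
  then show ?thesis by (simp add: nu_sum_def split: if_splits)
qed

lemma nu_sum_pos:
  assumes u: "u \<in> Delta" "u \<noteq> (\<lambda>_. 0)" and k: "\<And>s. 0 \<le> s \<Longrightarrow> s \<le> 1 \<Longrightarrow> \<bar>k s\<bar> \<le> C * s"
    and nonneg: "\<And>s. 0 \<le> s \<Longrightarrow> s \<le> 1 \<Longrightarrow> 0 \<le> k s"
    and pos: "\<And>s. 0 < s \<Longrightarrow> s \<le> 1 \<Longrightarrow> 0 < k s"
  shows "0 < nu_sum k u"
proof -
  obtain i where "u i \<noteq> 0" using u(2) by auto
  then have "0 < k (u i)" using pos Delta_memD[OF u(1)] by (simp add: order_le_neq_trans)
  then have "0 < (\<Sum>i. k (u i))"
    by (intro suminf_pos2[OF Delta_summable_linear[OF u(1) k]]) (use nonneg Delta_memD[OF u(1)] in auto)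
  then show ?thesis using sip_pos[OF u] u(2) by (simp add: nu_sum_def)
qed

lemma nu_sum_lincomb:
  assumes u: "u \<in> Delta" and k1: "\<And>s. 0 \<le> s \<Longrightarrow> s \<le> 1 \<Longrightarrow> \<bar>k1 s\<bar> \<le> C * s"
    and k2: "\<And>s. 0 \<le> s \<Longrightarrow> s \<le> 1 \<Longrightarrow> \<bar>k2 s\<bar> \<le> C * s"
  shows "nu_sum (\<lambda>s. c * k1 s - d * k2 s) u = c * nu_sum k1 u - d * nu_sum k2 u"
proof (cases "u = (\<lambda>_. 0)")
  case False
  have s1: "summable (\<lambda>i. k1 (u i))" by (rule Delta_summable_linear[OF u k1])
  have s2: "summable (\<lambda>i. k2 (u i))" by (rule Delta_summable_linear[OF u k2])
  have "(\<Sum>i. c * k1 (u i) - d * k2 (u i)) = c * (\<Sum>i. k1 (u i)) - d * (\<Sum>i. k2 (u i))"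
    using suminf_diff[OF summable_mult[OF s1, of c] summable_mult[OF s2, of d]]
      suminf_mult[OF s1, of c] suminf_mult[OF s2, of d] by simp
  then show ?thesis using False by (simp add: nu_sum_def diff_divide_distrib)
qed (simp add: nu_sum_def)

lemma nu_sum_has_real_derivative:
  assumes u: "u \<in> Delta" and x: "a < x" "x < b"
    and D: "\<And>y s. a < y \<Longrightarrow> y < b \<Longrightarrow> 0 \<le> s \<Longrightarrow> s \<le> 1 \<Longrightarrow>
              ((\<lambda>y. K y s) has_real_derivative K' y s) (at y)"
    and B': "\<And>y s. a < y \<Longrightarrow> y < b \<Longrightarrow> 0 \<le> s \<Longrightarrow> s \<le> 1 \<Longrightarrow> \<bar>K' y s\<bar> \<le> C * s\<^sup>2"
    and B: "\<And>s. 0 \<le> s \<Longrightarrow> s \<le> 1 \<Longrightarrow> \<bar>K x s\<bar> \<le> C * s\<^sup>2"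
  shows "((\<lambda>y. nu_sum (K y) u) has_real_derivative nu_sum (K' x) u) (at x)"
proof (cases "u = (\<lambda>_. 0)")
  case True then show ?thesis by (simp add: nu_sum_def)
next
  case False
  have "((\<lambda>y. \<Sum>n. K y (u n)) has_field_derivative (\<Sum>n. K' x (u n))) (at x)"
  proof (rule has_field_derivative_series'(2)[of "{a<..<b}" "\<lambda>n y. K y (u n)" "\<lambda>n y. K' y (u n)" x x])
    show "((\<lambda>y. K y (u n)) has_field_derivative K' y (u n)) (at y within {a<..<b})"
      if "y \<in> {a<..<b}" for n y
      using D[of y "u n"] that Delta_memD[OF u] by (auto intro: has_field_derivative_at_within)
    show "uniformly_convergent_on {a<..<b} (\<lambda>n y. \<Sum>i<n. K' y (u i))"
      by (rule Weierstrass_m_test'[where M="\<lambda>i. C * (u i)\<^sup>2"])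
         (use B' Delta_memD[OF u] in \<open>auto intro: summable_mult\<close>)
    show "summable (\<lambda>n. K x (u n))" by (rule Delta_suminf_quadratic_bound(1)[OF u B])
  qed (use x in auto)
  then show ?thesis using False by (simp add: nu_sum_def DERIV_cdivide)
qed

lemma nu_sum_kernel0_div_tendsto:
  assumes u: "u \<in> Delta"
  shows "((\<lambda>x. nu_sum (kernel0 x) u / x) \<longlongrightarrow> nu_sum (\<lambda>s. s) u) at_top"
proof (cases "u = (\<lambda>_. 0)")
  case True then show ?thesis by (simp add: nu_sum_def)
next
  case False
  have bound: "\<forall>\<^sub>F x in at_top. \<forall>k. norm (kernel0 x (u k) / x) \<le> u k"
    using eventually_ge_at_top[of 1]
  proof eventually_elim
    case (elim x)
    show ?case
      using kernel0_nonneg[of "u k" x for k] kernel0_le_linear[of "u k" x for k] Delta_memD[OF u] elim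
      by (auto simp: divide_le_eq mult.commute)
  qed
  have "((\<lambda>x. \<Sum>k. kernel0 x (u k) / x) \<longlongrightarrow> (\<Sum>k. u k)) at_top"
  proof (rule tannerys_theorem[where M=u, THEN conjunct2, THEN conjunct2])
    show "((\<lambda>x. kernel0 x (u k) / x) \<longlongrightarrow> u k) at_top" for k
      by (rule kernel0_div_tendsto) (use Delta_memD[OF u] in auto)
    have "\<forall>\<^sub>F (k, x) in (at_top :: nat filter) \<times>\<^sub>F at_top. \<forall>k'. norm (kernel0 x (u k') / x) \<le> u k'"
      using eventually_prod2[where A="at_top :: nat filter" and B=at_top
            and P="\<lambda>x. \<forall>k'. norm (kernel0 x (u k') / x) \<le> u k'"] bound by simp
    then show "\<forall>\<^sub>F (k, x) in at_top \<times>\<^sub>F at_top. norm (kernel0 x (u k) / x) \<le> u k"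
      by (rule eventually_mono) auto
  qed (use Delta_memD[OF u] in auto)
  then have "((\<lambda>x. (\<Sum>k. kernel0 x (u k) / x) / sip u) \<longlongrightarrow> (\<Sum>k. u k) / sip u) at_top"
    by (rule tendsto_divide[OF _ tendsto_const]) (use sip_pos[OF u False] in auto)
  moreover have "\<forall>\<^sub>F x in at_top. (\<Sum>k. kernel0 x (u k) / x) / sip u = nu_sum (kernel0 x) u / x"
    using eventually_ge_at_top[of 1]
  proof eventually_elim
    case (elim x)
    have "summable (\<lambda>k. kernel0 x (u k))"
      by (rule Delta_summable_linear[OF u, of _ "x\<^sup>2"]) (use kernel0_bounds_linear elim in auto)
    then show ?case using False by (simp add: nu_sum_def suminf_divide)
  qed
  ultimately show ?thesis using False by (simp add: nu_sum_def tendsto_cong)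
qed

lemma abs_nu_sum_kernel0_div_le:
  assumes u: "u \<in> Delta" and x: "1 \<le> x"
  shows "\<bar>nu_sum (kernel0 x) u / x\<bar> \<le> nu_sum (\<lambda>s. s) u"
proof -
  have k: "\<bar>kernel0 x s\<bar> \<le> x\<^sup>2 * s" if "0 \<le> s" "s \<le> 1" for s
    using kernel0_bounds_linear that x by simp
  have "\<bar>x * s\<bar> \<le> x\<^sup>2 * s" if "0 \<le> s" "s \<le> 1" for s
    using mult_right_mono[of x "x\<^sup>2" s] x that by (simp add: power2_eq_square abs_mult)
  then have "nu_sum (kernel0 x) u \<le> nu_sum (\<lambda>s. x * s) u"
    by (intro nu_sum_mono[OF u k]) (use kernel0_le_linear x in auto)
  also have "\<dots> = x * nu_sum (\<lambda>s. s) u"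
    using nu_sum_lincomb[OF u, of "\<lambda>s. s" 1 "\<lambda>s. s" x 0] by simp
  finally show ?thesis
    using nu_sum_nonneg[OF u k] kernel0_nonneg x by (simp add: divide_le_eq mult.commute)
qed

section \<open>The derivatives of \<open>\<gamma>\<close>\<close>

lemma has_real_derivative_integral_dominated:
  fixes F F' :: "real \<Rightarrow> 'a \<Rightarrow> real"
  assumes "finite_measure M" and x: "a < x" "x < b"
    and D: "\<And>y u. a < y \<Longrightarrow> y < b \<Longrightarrow> u \<in> space M \<Longrightarrow>
              ((\<lambda>y. F y u) has_real_derivative F' y u) (at y)"
    and B: "\<And>y u. a < y \<Longrightarrow> y < b \<Longrightarrow> u \<in> space M \<Longrightarrow> \<bar>F' y u\<bar> \<le> C"
    and I: "\<And>y. a < y \<Longrightarrow> y < b \<Longrightarrow> integrable M (F y)"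
    and [measurable]: "F' x \<in> borel_measurable M"
  shows "((\<lambda>y. \<integral>u. F y u \<partial>M) has_real_derivative (\<integral>u. F' x u \<partial>M)) (at x)"
  unfolding has_field_derivative_iff
proof (subst tendsto_at_iff_sequentially, intro allI impI)
  interpret finite_measure M by fact
  fix X :: "nat \<Rightarrow> real" assume X: "\<forall>i. X i \<in> UNIV - {x}" "X \<longlonglongrightarrow> x"
  have "\<forall>\<^sub>F i in sequentially. X i \<in> {a<..<b}"
    using X(2) x by (intro topological_tendstoD) auto
  then obtain N where N: "\<And>n. n \<ge> N \<Longrightarrow> X n \<in> {a<..<b}" by (auto simp: eventually_sequentially)
  define Y where "Y n = X (n + N)" for n
  have Y: "Y n \<in> {a<..<b}" "Y n \<noteq> x" for n using N X(1) by (auto simp: Y_def)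
  define Q where "Q n u = (F (Y n) u - F x u) / (Y n - x)" for n u
  have "norm (F (Y n) u - F x u) \<le> C * norm (Y n - x)" if u: "u \<in> space M" for n u
  proof (rule field_differentiable_bound[where S="{a<..<b}"])
    fix z assume z: "z \<in> {a<..<b}"
    then show "((\<lambda>y. F y u) has_field_derivative F' z u) (at z within {a<..<b})"
      using D[OF _ _ u] by (auto intro: has_field_derivative_at_within)
    show "norm (F' z u) \<le> C" using B[OF _ _ u] z by auto
  qed (use Y[of n] x in auto)
  then have bound: "\<bar>Q n u\<bar> \<le> C" if "u \<in> space M" for n u
    using Y(2)[of n] that by (simp add: Q_def abs_divide divide_le_eq)
  have "(\<lambda>n. Q n u) \<longlonglongrightarrow> F' x u" if u: "u \<in> space M" for u
  proof -
    have "((\<lambda>y. (F y u - F x u) / (y - x)) \<longlongrightarrow> F' x u) (at x)"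
      using D[OF x u] unfolding has_field_derivative_iff .
    moreover have "Y \<longlonglongrightarrow> x" unfolding Y_def by (rule LIMSEQ_ignore_initial_segment[OF X(2)])
    ultimately have "((\<lambda>y. (F y u - F x u) / (y - x)) \<circ> Y) \<longlonglongrightarrow> F' x u"
      using Y unfolding tendsto_at_iff_sequentially by blast
    then show ?thesis by (simp add: Q_def comp_def)
  qed
  then have "(\<lambda>n. \<integral>u. Q n u \<partial>M) \<longlonglongrightarrow> (\<integral>u. F' x u \<partial>M)"
  proof (intro integral_dominated_convergence[where w="\<lambda>_. C"] AE_I2)
    show "Q n \<in> borel_measurable M" for n
      unfolding Q_def using I[of "Y n"] I[OF x] Y[of n] by auto
  qed (use bound in auto)
  moreover have "(\<integral>u. Q n u \<partial>M) = ((\<integral>u. F (Y n) u \<partial>M) - (\<integral>u. F x u \<partial>M)) / (Y n - x)" for n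
    unfolding Q_def using I[of "Y n"] I[OF x] Y[of n] by simp
  ultimately have "(\<lambda>n. ((\<integral>u. F (Y n) u \<partial>M) - (\<integral>u. F x u \<partial>M)) / (Y n - x)) \<longlonglongrightarrow> (\<integral>u. F' x u \<partial>M)"
    by simp
  then show "((\<lambda>y. ((\<integral>u. F y u \<partial>M) - (\<integral>u. F x u \<partial>M)) / (y - x)) \<circ> X) \<longlonglongrightarrow> (\<integral>u. F' x u \<partial>M)"
    unfolding comp_def Y_def by (rule LIMSEQ_offset)
qed

context
  fixes Xi :: "(nat \<Rightarrow> real) measure"
  assumes finite: "finite_measure Xi"
    and sets_Xi: "sets Xi = sets (restrict_space borel Delta)"
begin

interpretation finite_measure Xi by (rule finite)

lemma space_Xi: "space Xi = Delta"
  using sets_eq_imp_space_eq[OF sets_Xi] by (simp add: space_restrict_space)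

lemma integrable_nu_sum:
  assumes "k \<in> borel_measurable borel" "\<And>s. 0 \<le> s \<Longrightarrow> s \<le> 1 \<Longrightarrow> \<bar>k s\<bar> \<le> C * s\<^sup>2" "0 \<le> C"
  shows "integrable Xi (nu_sum k)"
  by (rule integrable_const_bound[where B=C])
     (use abs_nu_sum_le[OF _ assms(2,3)] nu_sum_measurable[OF assms(1) sets_Xi] space_Xi in auto)

definition nu_integral :: "(real \<Rightarrow> real \<Rightarrow> real) \<Rightarrow> real \<Rightarrow> real" where
  "nu_integral k x = (\<integral>u. nu_sum (k x) u \<partial>Xi)"

definition gamma_d1 :: "real \<Rightarrow> real" where
  "gamma_d1 x = atom0 Xi * (2 * x - 1) / 2 + nu_integral kernel1 x"

definition gamma_d2 :: "real \<Rightarrow> real" where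
  "gamma_d2 x = atom0 Xi + nu_integral kernel2 x"

lemma gamma_eq: "gamma Xi x = atom0 Xi * x * (x - 1) / 2 + nu_integral kernel0 x"
  unfolding gamma_def nu_integral_def nu_sum_def kernel0_def by simp

lemma nu_integral_kernel0_has_real_derivative:
  assumes "1 < x"
  shows "(nu_integral kernel0 has_real_derivative nu_integral kernel1 x) (at x)"
  unfolding nu_integral_def
proof (rule has_real_derivative_integral_dominated[OF finite, of 1 x "x + 1" _ _ "x + 1"])
  fix y u assume y: "1 < y" "y < x + 1" and "u \<in> space Xi"
  then have u: "u \<in> Delta" using space_Xi by simp
  have sq: "x + 1 \<le> (x + 1)\<^sup>2" using assms by (simp add: power2_eq_square)
  show "((\<lambda>y. nu_sum (kernel0 y) u) has_real_derivative nu_sum (kernel1 y) u) (at y)"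
  proof (rule nu_sum_has_real_derivative[OF u y, where C="(x + 1)\<^sup>2"])
    show "\<bar>kernel1 z s\<bar> \<le> (x + 1)\<^sup>2 * s\<^sup>2" if "1 < z" "z < x + 1" "0 \<le> s" "s \<le> 1" for z s
      using kernel1_bounds[of s z "(x + 1)\<^sup>2"] that sq by simp
    show "\<bar>kernel0 y s\<bar> \<le> (x + 1)\<^sup>2 * s\<^sup>2" if "0 \<le> s" "s \<le> 1" for s
      using kernel0_bounds[OF that, of y] power_mono[of y "x + 1" 2] mult_right_mono[of "y\<^sup>2" "(x + 1)\<^sup>2" "s\<^sup>2"] y
      by simp
  qed (use kernel0_has_real_derivative in auto)
  show "\<bar>nu_sum (kernel1 y) u\<bar> \<le> x + 1"
    by (rule abs_nu_sum_le[OF u]) (use kernel1_bounds y in auto)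
next
  fix y assume "1 < y" "y < x + 1"
  then show "integrable Xi (nu_sum (kernel0 y))"
    by (intro integrable_nu_sum[of _ "y\<^sup>2"]) (use kernel0_bounds in auto)
qed (use assms in \<open>auto intro: nu_sum_measurable[OF _ sets_Xi]\<close>)

lemma nu_integral_kernel1_has_real_derivative:
  assumes "2 < x"
  shows "(nu_integral kernel1 has_real_derivative nu_integral kernel2 x) (at x)"
  unfolding nu_integral_def
proof (rule has_real_derivative_integral_dominated[OF finite, of 2 x "x + 1" _ _ 1])
  fix y u assume y: "2 < y" "y < x + 1" and "u \<in> space Xi"
  then have u: "u \<in> Delta" using space_Xi by simp
  show "((\<lambda>y. nu_sum (kernel1 y) u) has_real_derivative nu_sum (kernel2 y) u) (at y)"
  proof (rule nu_sum_has_real_derivative[OF u y, where C="x + 1"])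
    show "\<bar>kernel2 z s\<bar> \<le> (x + 1) * s\<^sup>2" if "2 < z" "0 \<le> s" "s \<le> 1" for z s
      using kernel2_bounds[of s z] mult_right_mono[of 1 "x + 1" "s\<^sup>2"] that assms by simp
    show "\<bar>kernel1 y s\<bar> \<le> (x + 1) * s\<^sup>2" if "0 \<le> s" "s \<le> 1" for s
      using kernel1_bounds[of s y "x + 1"] that y by simp
  qed (use kernel1_has_real_derivative in auto)
  show "\<bar>nu_sum (kernel2 y) u\<bar> \<le> 1"
    by (rule abs_nu_sum_le[OF u]) (use kernel2_bounds y in auto)
next
  fix y assume "2 < y" "y < x + 1"
  then show "integrable Xi (nu_sum (kernel1 y))"
    by (intro integrable_nu_sum[of _ y]) (use kernel1_bounds in auto)
qed (use assms in \<open>auto intro: nu_sum_measurable[OF _ sets_Xi]\<close>)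

lemma gamma_has_real_derivative:
  assumes "1 < x"
  shows "(gamma Xi has_real_derivative gamma_d1 x) (at x)"
proof -
  have "((\<lambda>x. atom0 Xi * x * (x - 1) / 2 + nu_integral kernel0 x) has_real_derivative
          atom0 Xi * (2 * x - 1) / 2 + nu_integral kernel1 x) (at x)"
    using nu_integral_kernel0_has_real_derivative[OF assms]
    by (auto intro!: derivative_eq_intros) (simp add: field_simps; simp add: algebra_simps)
  then show ?thesis unfolding gamma_eq[abs_def] gamma_d1_def .
qed

lemma gamma_d1_has_real_derivative:
  assumes "2 < x"
  shows "(gamma_d1 has_real_derivative gamma_d2 x) (at x)"
  unfolding gamma_d1_def[abs_def] gamma_d2_def
  using nu_integral_kernel1_has_real_derivative[OF assms] by (auto intro!: derivative_eq_intros)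

lemma deriv_deriv_gamma:
  assumes "2 < x"
  shows "deriv (deriv (gamma Xi)) x = gamma_d2 x"
proof -
  have "(deriv (gamma Xi) has_real_derivative gamma_d2 x) (at x)"
    by (rule has_field_derivative_transform_within_open[OF gamma_d1_has_real_derivative[OF assms], of "{1<..}"])
       (use assms DERIV_imp_deriv[OF gamma_has_real_derivative] in auto)
  then show ?thesis by (rule DERIV_imp_deriv)
qed

lemma gamma_continuous_on: "continuous_on {1<..} (gamma Xi)"
  by (intro continuous_at_imp_continuous_on ballI DERIV_isCont[OF gamma_has_real_derivative]) auto

lemma atom0_nonneg: "0 \<le> atom0 Xi"
  by (simp add: atom0_def)

lemma gamma_le_mult_gamma_d1:
  assumes x: "1 < x"
  shows "gamma Xi x \<le> x * gamma_d1 x"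
proof -
  have "x \<le> x\<^sup>2" using x by (simp add: power2_eq_square mult_le_cancel_left1)
  then have "x * s \<le> x\<^sup>2 * s" if "0 \<le> s" for s using that by (rule mult_right_mono)
  then have k0: "\<bar>kernel0 x s\<bar> \<le> x\<^sup>2 * s" and k1: "\<bar>kernel1 x s\<bar> \<le> x\<^sup>2 * s"
    if "0 \<le> s" "s \<le> 1" for s
    using kernel0_bounds_linear[OF that, of x] kernel1_bounds_linear[OF that, of x] x that
    by fastforce+
  have k: "\<bar>x * kernel1 x s - 1 * kernel0 x s\<bar> \<le> (x * x\<^sup>2 + x\<^sup>2) * s" if "0 \<le> s" "s \<le> 1" for s
  proof -
    have "\<bar>x * kernel1 x s - 1 * kernel0 x s\<bar> \<le> x * \<bar>kernel1 x s\<bar> + \<bar>kernel0 x s\<bar>"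
      using abs_triangle_ineq4[of "x * kernel1 x s" "kernel0 x s"] x by (simp add: abs_mult)
    also have "\<dots> \<le> x * (x\<^sup>2 * s) + x\<^sup>2 * s"
      using k0[OF that] k1[OF that] x by (intro add_mono mult_left_mono) auto
    finally show ?thesis by (simp add: distrib_right mult.assoc)
  qed
  have "x * nu_integral kernel1 x - nu_integral kernel0 x = (\<integral>u. x * nu_sum (kernel1 x) u - 1 * nu_sum (kernel0 x) u \<partial>Xi)"
    using integrable_nu_sum[of "kernel1 x" x] integrable_nu_sum[of "kernel0 x" "x\<^sup>2"]
      kernel1_bounds[of _ x x] kernel0_bounds[of _ x] x by (simp add: nu_integral_def)
  also have "\<dots> = (\<integral>u. nu_sum (\<lambda>s. x * kernel1 x s - 1 * kernel0 x s) u \<partial>Xi)"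
    by (intro Bochner_Integration.integral_cong refl nu_sum_lincomb[symmetric, OF _ k1 k0])
       (simp add: space_Xi)
  also have "\<dots> \<ge> 0"
    by (intro integral_nonneg_AE AE_I2 nu_sum_nonneg[OF _ k])
       (use mult_kernel1_ge_kernel0 space_Xi in auto)
  finally have "nu_integral kernel0 x \<le> x * nu_integral kernel1 x" by simp
  moreover have "x * (atom0 Xi * (2 * x - 1) / 2) - atom0 Xi * x * (x - 1) / 2
      = (x * (atom0 Xi * (2 * x - 1)) - atom0 Xi * x * (x - 1)) / 2"
    by (simp add: diff_divide_distrib)
  moreover have "x * (atom0 Xi * (2 * x - 1)) - atom0 Xi * x * (x - 1) = atom0 Xi * x\<^sup>2"
    by (simp add: algebra_simps power2_eq_square)
  moreover have "0 \<le> atom0 Xi * x\<^sup>2 / 2" using atom0_nonneg by simp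
  moreover have "x * gamma_d1 x - gamma Xi x = (x * (atom0 Xi * (2 * x - 1) / 2) - atom0 Xi * x * (x - 1) / 2)
      + (x * nu_integral kernel1 x - nu_integral kernel0 x)"
    unfolding gamma_d1_def gamma_eq by (simp add: algebra_simps)
  ultimately show ?thesis by linarith
qed

lemma Xi_zero_measurable: "{\<lambda>_. 0} \<in> sets Xi"
proof -
  have "{\<lambda>_. 0::real} = Delta \<inter> {u::nat \<Rightarrow> real. \<forall>i. u i = 0}"
    by (auto simp: Delta_def)
  moreover have "{u::nat \<Rightarrow> real. \<forall>i. u i = 0} \<in> sets borel" by measurable
  ultimately show ?thesis by (simp add: sets_Xi sets_restrict_space)
qed

text \<open>If \<open>a = 0\<close>, then \<open>\<Xi>\<close> lives on \<open>\<Delta> - {0}\<close>, where the integrand of \<open>\<gamma>\<close> is positive.\<close>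
lemma gamma_pos:
  assumes nonzero: "emeasure Xi Delta \<noteq> 0" and x: "1 < x"
  shows "0 < gamma Xi x"
proof -
  have k: "\<bar>kernel0 x s\<bar> \<le> x\<^sup>2 * s" if "0 \<le> s" "s \<le> 1" for s
    using kernel0_bounds_linear[OF that, of x] x by simp
  have nonneg: "0 \<le> nu_sum (kernel0 x) u" if "u \<in> space Xi" for u
    using nu_sum_nonneg[OF _ k] kernel0_nonneg[of _ x] that x space_Xi by auto
  have integrable: "integrable Xi (nu_sum (kernel0 x))"
    by (rule integrable_nu_sum[of _ "x\<^sup>2"]) (use kernel0_bounds x in auto)
  have int_nonneg: "0 \<le> nu_integral kernel0 x"
    unfolding nu_integral_def by (rule integral_nonneg_AE) (use nonneg in auto)
  have "0 < nu_integral kernel0 x" if a: "atom0 Xi = 0"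
  proof (rule ccontr)
    assume "\<not> 0 < nu_integral kernel0 x"
    then have "AE u in Xi. nu_sum (kernel0 x) u = 0"
      using int_nonneg integral_nonneg_eq_0_iff_AE[OF integrable AE_I2[OF nonneg]]
      by (simp add: nu_integral_def)
    moreover have "{\<lambda>_. 0} \<in> null_sets Xi"
      using a Xi_zero_measurable by (simp add: atom0_def emeasure_eq_measure null_sets_def)
    then have "AE u in Xi. u \<noteq> (\<lambda>_. 0)" using AE_not_in by fastforce
    then have "AE u in Xi. 0 < nu_sum (kernel0 x) u"
      using AE_space
      by eventually_elim
         (use nu_sum_pos[OF _ _ k] kernel0_nonneg[of _ x] kernel0_pos[of _ x] x space_Xi in auto)
    ultimately have "AE u in Xi. False" by eventually_elim auto
    then show False using nonzero space_Xi ae_filter_eq_bot_iff trivial_limit_def by metis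
  qed
  moreover note int_nonneg
  moreover have "0 < atom0 Xi * x * (x - 1) / 2" if "atom0 Xi \<noteq> 0"
    using atom0_nonneg that x by simp
  ultimately show ?thesis unfolding gamma_eq by fastforce
qed

lemma mono_on_gamma_div: "mono_on {1<..} (\<lambda>x. gamma Xi x / x)"
proof (rule mono_onI)
  fix x y :: real assume xy: "x \<in> {1<..}" "y \<in> {1<..}" "x \<le> y"
  show "gamma Xi x / x \<le> gamma Xi y / y"
  proof (rule DERIV_nonneg_imp_nondecreasing[OF xy(3)])
    fix z assume "x \<le> z" "z \<le> y"
    then have z: "1 < z" using xy by auto
    have "((\<lambda>x. gamma Xi x / x) has_real_derivative (gamma_d1 z * z - gamma Xi z * 1) / (z * z)) (at z)"
      by (rule DERIV_divide[OF gamma_has_real_derivative[OF z] DERIV_ident]) (use z in auto)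
    moreover have "0 \<le> (gamma_d1 z * z - gamma Xi z * 1) / (z * z)"
      using gamma_le_mult_gamma_d1[OF z] z by (simp add: mult.commute)
    ultimately show "\<exists>d. ((\<lambda>x. gamma Xi x / x) has_real_derivative d) (at z) \<and> 0 \<le> d"
      by blast
  qed
qed

lemma gamma_div_tendsto_mu:
  assumes atom: "atom0 Xi = 0" and mu: "mu Xi < \<infinity>"
  shows "((\<lambda>x. gamma Xi x / x) \<longlongrightarrow> enn2real (mu Xi)) at_top"
proof -
  have meas: "nu_sum (\<lambda>s. s) \<in> borel_measurable Xi" by (rule nu_sum_measurable[OF _ sets_Xi]) simp
  have nonneg: "0 \<le> nu_sum (\<lambda>s. s) u" if "u \<in> space Xi" for u
    by (rule nu_sum_nonneg[of _ _ 1]) (use that space_Xi in auto)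
  have mu_eq: "mu Xi = (\<integral>\<^sup>+u. ennreal (nu_sum (\<lambda>s. s) u) \<partial>Xi)"
    unfolding mu_def sabs_def nu_sum_def by simp
  have integrable: "integrable Xi (nu_sum (\<lambda>s. s))"
    by (rule integrableI_nonneg[OF meas]) (use nonneg mu mu_eq in auto)
  have "((\<lambda>x. \<integral>u. nu_sum (kernel0 x) u / x \<partial>Xi) \<longlongrightarrow> (\<integral>u. nu_sum (\<lambda>s. s) u \<partial>Xi)) at_top"
  proof (rule integral_dominated_convergence_at_top[where w="nu_sum (\<lambda>s. s)"])
    show "AE u in Xi. ((\<lambda>x. nu_sum (kernel0 x) u / x) \<longlongrightarrow> nu_sum (\<lambda>s. s) u) at_top"
      using nu_sum_kernel0_div_tendsto space_Xi by auto
    show "\<forall>\<^sub>F x in at_top. AE u in Xi. norm (nu_sum (kernel0 x) u / x) \<le> nu_sum (\<lambda>s. s) u"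
      using eventually_ge_at_top[of 1] by eventually_elim (use abs_nu_sum_kernel0_div_le space_Xi in auto)
  qed (use meas integrable nu_sum_measurable[OF _ sets_Xi] in simp_all)
  moreover have "\<forall>\<^sub>F x in at_top. (\<integral>u. nu_sum (kernel0 x) u / x \<partial>Xi) = gamma Xi x / x"
    by (intro always_eventually allI) (simp add: gamma_eq nu_integral_def atom)
  ultimately have "((\<lambda>x. gamma Xi x / x) \<longlongrightarrow> (\<integral>u. nu_sum (\<lambda>s. s) u \<partial>Xi)) at_top"
    by (rule Lim_transform_eventually)
  moreover have "enn2real (mu Xi) = (\<integral>u. nu_sum (\<lambda>s. s) u \<partial>Xi)"
    using integral_eq_nn_integral[OF meas AE_I2[OF nonneg]] mu_eq by simp
  ultimately show ?thesis by simp
qed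

lemma gamma_rate_tendsto:
  assumes "((\<lambda>x. x * deriv (deriv (gamma Xi)) x) \<longlongrightarrow> \<kappa>) at_top"
  shows "((\<lambda>x. (x * gamma_d1 x - gamma Xi x) / x) \<longlongrightarrow> \<kappa>) at_top"
proof (rule lhospital_at_top_at_top[where g' = "\<lambda>_. 1" and f' = "\<lambda>x. x * gamma_d2 x"])
  show "\<forall>\<^sub>F x in at_top. ((\<lambda>x. x * gamma_d1 x - gamma Xi x) has_real_derivative x * gamma_d2 x) (at x)"
    using eventually_gt_at_top[of 2]
  proof eventually_elim
    case (elim x)
    then have "((\<lambda>x. x * gamma_d1 x - gamma Xi x) has_real_derivative
                 (1 * gamma_d1 x + gamma_d2 x * x) - gamma_d1 x) (at x)"
      by (intro DERIV_diff DERIV_mult DERIV_ident gamma_d1_has_real_derivative gamma_has_real_derivative)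
         simp_all
    then show ?case by (simp add: mult.commute)
  qed
  have "\<forall>\<^sub>F x in at_top. x * deriv (deriv (gamma Xi)) x = x * gamma_d2 x / 1"
    using eventually_gt_at_top[of 2] by eventually_elim (simp add: deriv_deriv_gamma)
  then show "((\<lambda>x. x * gamma_d2 x / 1) \<longlongrightarrow> \<kappa>) at_top"
    using assms by (simp only: tendsto_cong)
qed (auto intro: filterlim_ident)

end

section \<open>Travel times of the flow \<open>w' = g(w)\<close>\<close>

definition travel_time :: "(real \<Rightarrow> real) \<Rightarrow> real \<Rightarrow> real \<Rightarrow> real" where
  "travel_time g a b = integral {a..b} (\<lambda>u. 1 / g u)"

definition travel_time_unbounded :: "(real \<Rightarrow> real) \<Rightarrow> bool" where
  "travel_time_unbounded g \<longleftrightarrow> (\<forall>x T. 1 < x \<longrightarrow> (\<exists>y\<ge>x. T \<le> travel_time g x y))"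

lemma ln_has_integral:
  fixes a b :: real
  assumes "0 < a" "a \<le> b"
  shows "((\<lambda>u. 1 / u) has_integral (ln b - ln a)) {a..b}"
proof (rule fundamental_theorem_of_calculus[OF assms(2)])
  fix x assume "x \<in> {a..b}"
  then have "0 < x" using assms by auto
  then show "(ln has_vector_derivative 1 / x) (at x within {a..b})"
    using DERIV_ln_divide[of x] has_field_derivative_at_within
    by (auto simp: has_real_derivative_iff_has_vector_derivative[symmetric])
qed

lemma tendsto_divide_exp_of_ln_diff:
  fixes f g :: "'a \<Rightarrow> real"
  assumes pos: "\<forall>\<^sub>F x in F. 0 < f x \<and> 0 < g x"
    and lim: "((\<lambda>x. ln (f x) - ln (g x)) \<longlongrightarrow> c) F"
  shows "((\<lambda>x. f x / g x) \<longlongrightarrow> exp c) F"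
proof -
  have "((\<lambda>x. exp (ln (f x) - ln (g x))) \<longlongrightarrow> exp c) F"
    by (rule tendsto_exp[OF lim])
  moreover have "\<forall>\<^sub>F x in F. exp (ln (f x) - ln (g x)) = f x / g x"
    using pos by eventually_elim (simp add: exp_diff)
  ultimately show ?thesis by (rule Lim_transform_eventually)
qed

lemma asymp_equiv_of_ln_diff_tendsto:
  fixes f g :: "real \<Rightarrow> real"
  assumes "\<forall>\<^sub>F x in at_top. 0 < f x \<and> 0 < g x"
    and "((\<lambda>x. ln (f x) - ln (g x)) \<longlongrightarrow> 0) at_top"
  shows "f \<sim>[at_top] g"
  using tendsto_divide_exp_of_ln_diff[OF assms] by (intro asymp_equivI') simp

context
  fixes g :: "real \<Rightarrow> real"
  assumes continuous: "continuous_on {1<..} g" and pos: "\<And>x. 1 < x \<Longrightarrow> 0 < g x"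
begin

lemma travel_time_has_integral:
  assumes "1 < a"
  shows "((\<lambda>u. 1 / g u) has_integral travel_time g a b) {a..b}"
proof -
  have "continuous_on {a..b} (\<lambda>u. 1 / g u)"
    by (intro continuous_intros continuous_on_subset[OF continuous])
       (use pos assms in \<open>auto simp: less_imp_neq[symmetric]\<close>)
  then show ?thesis
    unfolding travel_time_def by (rule integrable_integral[OF integrable_continuous_interval])
qed

lemma travel_time_add:
  "1 < a \<Longrightarrow> a \<le> b \<Longrightarrow> b \<le> c \<Longrightarrow> travel_time g a b + travel_time g b c = travel_time g a c"
  unfolding travel_time_def
  using Henstock_Kurzweil_Integration.integral_combine[where f="\<lambda>u. 1 / g u" and a=a and c=b and b=c] has_integral_integrable[OF travel_time_has_integral[of a c]]
  by auto

lemma travel_time_nonneg: "1 < a \<Longrightarrow> 0 \<le> travel_time g a b"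
  unfolding travel_time_def
  by (rule integral_nonneg[OF has_integral_integrable[OF travel_time_has_integral[unfolded travel_time_def]]])
     (use pos in \<open>auto simp: less_imp_le\<close>)

lemma travel_time_pos:
  assumes "1 < a" "a < b"
  shows "0 < travel_time g a b"
proof -
  have "continuous_on {a..b} g" by (rule continuous_on_subset[OF continuous]) (use assms in auto)
  then obtain m where m: "m \<in> {a..b}" "\<And>y. y \<in> {a..b} \<Longrightarrow> g y \<le> g m"
    using continuous_attains_sup[of "{a..b}" g] assms by auto
  have "1 / g m \<le> 1 / g y" if "y \<in> {a..b}" for y
    using m(2)[OF that] pos[of y] that assms by (intro divide_left_mono) auto
  then have "(b - a) * (1 / g m) \<le> travel_time g a b"
    using has_integral_const_real[of "1 / g m" a b] assms
    by (intro has_integral_le[OF _ travel_time_has_integral]) auto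
  moreover have "0 < (b - a) * (1 / g m)" using pos[of m] m assms by simp
  ultimately show ?thesis by linarith
qed

lemma travel_time_strict_mono: "1 < a \<Longrightarrow> a \<le> b \<Longrightarrow> b < c \<Longrightarrow> travel_time g a b < travel_time g a c"
  using travel_time_add[of a b c] travel_time_pos[of b c] by auto

lemma wfun_ex1:
  assumes unbounded: "travel_time_unbounded g" and x: "1 < x" and t: "0 \<le> t"
  shows "\<exists>!y. x \<le> y \<and> ((\<lambda>u. 1 / g u) has_integral t) {x..y}"
proof -
  have has_int_iff: "((\<lambda>u. 1 / g u) has_integral t) {x..y} \<longleftrightarrow> travel_time g x y = t" for y
    using travel_time_has_integral[OF x, of y] has_integral_unique by blast
  obtain Y where Y: "x \<le> Y" "t \<le> travel_time g x Y" using unbounded x unfolding travel_time_unbounded_def by blast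
  have "continuous_on {x..Y} (travel_time g x)"
    unfolding travel_time_def[abs_def]
    by (rule indefinite_integral_continuous_1[OF has_integral_integrable[OF travel_time_has_integral[OF x]]])
  then obtain y where y: "x \<le> y" "y \<le> Y" "travel_time g x y = t"
    using IVT'[of "travel_time g x" x t Y] Y t by (auto simp: travel_time_def)
  show ?thesis
  proof (rule ex1I[of _ y])
    fix z assume "x \<le> z \<and> ((\<lambda>u. 1 / g u) has_integral t) {x..z}"
    then have z: "x \<le> z" "travel_time g x z = t" using has_int_iff by auto
    show "z = y"
    proof (rule ccontr)
      assume "z \<noteq> y"
      then have "z < y \<or> y < z" by auto
      then show False
        using travel_time_strict_mono[OF x z(1), of y] travel_time_strict_mono[OF x y(1), of z] z y by auto
    qed
  qed (use y has_int_iff in auto)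
qed

lemma wfun_ge_and_travel_time:
  assumes unbounded: "travel_time_unbounded g" and x: "1 < x" and t: "0 \<le> t"
  shows "x \<le> wfun g x t" "travel_time g x (wfun g x t) = t"
proof -
  have "x \<le> wfun g x t \<and> ((\<lambda>u. 1 / g u) has_integral t) {x..wfun g x t}"
    unfolding wfun_def using x theI'[OF wfun_ex1[OF assms]] by simp
  then show "x \<le> wfun g x t" "travel_time g x (wfun g x t) = t"
    using travel_time_has_integral[OF x, of "wfun g x t"] has_integral_unique by blast+
qed

lemma wfun_eqI:
  assumes unbounded: "travel_time_unbounded g" and x: "1 < x" and y: "x \<le> y" "travel_time g x y = t"
  shows "wfun g x t = y"
proof -
  have t: "0 \<le> t" using travel_time_nonneg[OF x, of y] y by simp
  have "((\<lambda>u. 1 / g u) has_integral t) {x..y}" using travel_time_has_integral[OF x, of y] y by simp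
  then show ?thesis
    unfolding wfun_def using x the1_equality[OF wfun_ex1[OF unbounded x t], of y] y by simp
qed

lemma wfun_mono_time:
  assumes unbounded: "travel_time_unbounded g" and x: "1 < x" and t: "0 \<le> t" "t \<le> t'"
  shows "wfun g x t \<le> wfun g x t'" "travel_time g (wfun g x t) (wfun g x t') = t' - t"
proof -
  note w = wfun_ge_and_travel_time[OF unbounded x t(1)]
  note w' = wfun_ge_and_travel_time[OF unbounded x order_trans[OF t]]
  show le: "wfun g x t \<le> wfun g x t'"
  proof (rule ccontr)
    assume "\<not> ?thesis"
    then have "travel_time g x (wfun g x t') < travel_time g x (wfun g x t)"
      by (intro travel_time_strict_mono[OF x w'(1)]) auto
    then show False using w w' t by auto
  qed
  show "travel_time g (wfun g x t) (wfun g x t') = t' - t"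
    using travel_time_add[OF x w(1) le] w w' by simp
qed

lemma wfun_mono_and_travel_time:
  assumes unbounded: "travel_time_unbounded g" and x: "1 < x" "x \<le> y" and t: "0 \<le> t"
  shows "wfun g x t \<le> wfun g y t" "travel_time g x y = travel_time g (wfun g x t) (wfun g y t)"
proof -
  have y: "1 < y" using x by auto
  note p = wfun_ge_and_travel_time[OF unbounded x(1) t] and q = wfun_ge_and_travel_time[OF unbounded y t]
  have sum: "travel_time g x (wfun g y t) = travel_time g x y + t"
    using travel_time_add[OF x(1) x(2) q(1)] q by simp
  show le: "wfun g x t \<le> wfun g y t"
  proof (rule ccontr)
    assume "\<not> ?thesis"
    then have "travel_time g x (wfun g y t) < t"
      using travel_time_strict_mono[OF x(1), of "wfun g y t" "wfun g x t"] x q(1) p by auto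
    then show False using sum travel_time_nonneg[OF x(1), of y] by linarith
  qed
  show "travel_time g x y = travel_time g (wfun g x t) (wfun g y t)"
    using sum travel_time_add[OF x(1) p(1) le] p by simp
qed

lemma ln_diff_travel_time_bounds:
  assumes mono: "mono_on {1<..} (\<lambda>x. g x / x)" and ab: "1 < a" "a \<le> b"
  shows "g a / a * travel_time g a b \<le> ln b - ln a" "ln b - ln a \<le> g b / b * travel_time g a b"
proof -
  have ln: "((\<lambda>u. 1 / u) has_integral (ln b - ln a)) {a..b}" by (rule ln_has_integral) (use ab in auto)
  have eq: "1 / u = (g u / u) * (1 / g u)" if "u \<in> {a..b}" for u
    using pos[of u] that ab by auto
  have lo: "g a / a * (1 / g u) \<le> 1 / u" and up: "1 / u \<le> g b / b * (1 / g u)" if u: "u \<in> {a..b}" for u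
  proof -
    have "g a / a \<le> g u / u" "g u / u \<le> g b / b"
      using mono_onD[OF mono, of a u] mono_onD[OF mono, of u b] u ab by auto
    moreover have "0 \<le> 1 / g u" using pos[of u] u ab by simp
    ultimately have "g a / a * (1 / g u) \<le> g u / u * (1 / g u)" "g u / u * (1 / g u) \<le> g b / b * (1 / g u)"
      by (simp_all only: mult_right_mono)
    then show "g a / a * (1 / g u) \<le> 1 / u" "1 / u \<le> g b / b * (1 / g u)"
      unfolding eq[OF u] by simp_all
  qed
  show "g a / a * travel_time g a b \<le> ln b - ln a"
    by (rule has_integral_le[OF has_integral_mult_right[OF travel_time_has_integral[OF ab(1)]] ln])
       (use lo in auto)
  show "ln b - ln a \<le> g b / b * travel_time g a b"
    by (rule has_integral_le[OF ln has_integral_mult_right[OF travel_time_has_integral[OF ab(1)]]])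
       (use up in auto)
qed

lemma ln_q_diff_travel_time_bounds:
  assumes X0: "1 < X0" and D: "\<And>x. X0 \<le> x \<Longrightarrow> (g has_real_derivative g' x) (at x)"
    and ab: "X0 \<le> a" "a \<le> b"
    and r: "\<And>u. u \<in> {a..b} \<Longrightarrow> c1 \<le> (u * g' u - g u) / u \<and> (u * g' u - g u) / u \<le> c2"
  shows "c1 * travel_time g a b \<le> ln (g b / b) - ln (g a / a)"
    "ln (g b / b) - ln (g a / a) \<le> c2 * travel_time g a b"
proof -
  have a: "1 < a" using X0 ab by auto
  define R where "R u = (u * g' u - g u) / u / g u" for u
  have FT: "(R has_integral (ln (g b / b) - ln (g a / a))) {a..b}"
  proof (rule fundamental_theorem_of_calculus[OF ab(2)])
    fix u assume u: "u \<in> {a..b}"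
    then have u0: "0 < u" "0 < g u" "X0 \<le> u" using a pos[of u] ab by auto
    have "((\<lambda>u. ln (g u / u)) has_real_derivative (1 / (g u / u)) * ((g' u * u - g u * 1) / (u * u))) (at u)"
      by (rule DERIV_chain2[OF DERIV_ln_divide DERIV_divide[OF D[OF u0(3)] DERIV_ident]]) (use u0 in auto)
    moreover have "(1 / (g u / u)) * ((g' u * u - g u * 1) / (u * u)) = R u"
      using u0 by (simp add: R_def field_simps)
    ultimately show "((\<lambda>u. ln (g u / u)) has_vector_derivative R u) (at u within {a..b})"
      by (auto simp: has_real_derivative_iff_has_vector_derivative[symmetric] intro!: has_field_derivative_at_within)
  qed
  have R: "c1 * (1 / g u) \<le> R u \<and> R u \<le> c2 * (1 / g u)" if "u \<in> {a..b}" for u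
  proof -
    have gu: "0 < g u" using pos[of u] that a by auto
    have "c1 / g u \<le> ((u * g' u - g u) / u) / g u" "((u * g' u - g u) / u) / g u \<le> c2 / g u"
      by (rule divide_right_mono; use r[OF that] gu in auto)+
    then show ?thesis unfolding R_def by (simp only: times_divide_eq_right mult_1_right)
  qed
  show "c1 * travel_time g a b \<le> ln (g b / b) - ln (g a / a)"
    by (rule has_integral_le[OF has_integral_mult_right[OF travel_time_has_integral[OF a]] FT])
       (use R in auto)
  show "ln (g b / b) - ln (g a / a) \<le> c2 * travel_time g a b"
    by (rule has_integral_le[OF FT has_integral_mult_right[OF travel_time_has_integral[OF a]]])
       (use R in auto)
qed

lemma travel_time_unbounded_of_le:
  assumes mono: "mono_on {1<..} (\<lambda>x. g x / x)" and le: "\<And>x. 1 < x \<Longrightarrow> g x / x \<le> \<mu>"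
  shows "travel_time_unbounded g"
  unfolding travel_time_unbounded_def
proof (intro allI impI)
  fix x T :: real assume x: "1 < x"
  have \<mu>: "0 < \<mu>" using le[of 2] pos[of 2] by simp
  define y where "y = x * exp (\<mu> * max T 0)"
  have xy: "x \<le> y" using x \<mu> by (simp add: y_def)
  have "\<mu> * max T 0 = ln y - ln x" using x by (simp add: y_def ln_mult)
  also have "\<dots> \<le> g y / y * travel_time g x y" by (rule ln_diff_travel_time_bounds(2)[OF mono x xy])
  also have "\<dots> \<le> \<mu> * travel_time g x y"
    using le[of y] xy x travel_time_nonneg[OF x, of y] by (intro mult_right_mono) auto
  finally have "T \<le> travel_time g x y" using \<mu> by simp
  then show "\<exists>y\<ge>x. T \<le> travel_time g x y" using xy by blast
qed

lemma wfun_asymp_equiv_linear: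
  assumes mono: "mono_on {1<..} (\<lambda>x. g x / x)" and lim: "((\<lambda>x. g x / x) \<longlongrightarrow> \<mu>) at_top"
    and t: "0 \<le> t"
  shows "(\<lambda>x. wfun g x t) \<sim>[at_top] (\<lambda>x. x * exp (\<mu> * t))"
proof (rule asymp_equiv_of_ln_diff_tendsto)
  have le: "g x / x \<le> \<mu>" if "1 < x" for x
  proof (rule tendsto_lowerbound[OF lim])
    show "\<forall>\<^sub>F y in at_top. g x / x \<le> g y / y"
      using eventually_ge_at_top[of x] by eventually_elim (use mono_onD[OF mono] that in auto)
  qed simp
  have unbounded: "travel_time_unbounded g" by (rule travel_time_unbounded_of_le[OF mono le])
  note w = wfun_ge_and_travel_time[OF unbounded _ t]
  have bounds: "(g x / x - \<mu>) * t \<le> ln (wfun g x t) - ln (x * exp (\<mu> * t))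
      \<and> ln (wfun g x t) - ln (x * exp (\<mu> * t)) \<le> 0" if x: "1 < x" for x
  proof -
    have "g x / x * t \<le> ln (wfun g x t) - ln x"
      using ln_diff_travel_time_bounds(1)[OF mono x w(1)[OF x]] w(2)[OF x] by simp
    moreover have "ln (wfun g x t) - ln x \<le> g (wfun g x t) / wfun g x t * t"
      using ln_diff_travel_time_bounds(2)[OF mono x w(1)[OF x]] w(2)[OF x] by simp
    moreover have "g (wfun g x t) / wfun g x t * t \<le> \<mu> * t"
      using le[of "wfun g x t"] w(1)[OF x] x t by (intro mult_right_mono) auto
    ultimately show ?thesis using x by (simp add: ln_mult algebra_simps)
  qed
  have "((\<lambda>x. (g x / x - \<mu>) * t) \<longlongrightarrow> (\<mu> - \<mu>) * t) at_top"
    by (intro tendsto_intros lim)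
  then have lower: "((\<lambda>x. (g x / x - \<mu>) * t) \<longlongrightarrow> 0) at_top" by simp
  show "((\<lambda>x. ln (wfun g x t) - ln (x * exp (\<mu> * t))) \<longlongrightarrow> 0) at_top"
  proof (rule tendsto_sandwich[OF _ _ lower tendsto_const])
    show "\<forall>\<^sub>F x in at_top. (g x / x - \<mu>) * t \<le> ln (wfun g x t) - ln (x * exp (\<mu> * t))"
      "\<forall>\<^sub>F x in at_top. ln (wfun g x t) - ln (x * exp (\<mu> * t)) \<le> 0"
      using eventually_gt_at_top[of 1] by (eventually_elim, use bounds in blast)+
  qed
  show "\<forall>\<^sub>F x in at_top. 0 < wfun g x t \<and> 0 < x * exp (\<mu> * t)"
    using eventually_gt_at_top[of 1]
  proof eventually_elim
    case (elim x)
    then show ?case using w(1)[OF elim] by simp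
  qed
qed

end

lemma abs_travel_time_diff_le:
  fixes g g1 :: "real \<Rightarrow> real"
  assumes "continuous_on {1<..} g" "\<And>x. 1 < x \<Longrightarrow> 0 < g x"
    and "continuous_on {1<..} g1" "\<And>x. 1 < x \<Longrightarrow> 0 < g1 x" and a: "1 < a"
    and close: "\<And>u. u \<in> {a..b} \<Longrightarrow> \<bar>1 / g u - 1 / g1 u\<bar> \<le> \<delta> * (1 / g1 u)"
  shows "\<bar>travel_time g a b - travel_time g1 a b\<bar> \<le> \<delta> * travel_time g1 a b"
proof -
  note T = travel_time_has_integral[OF assms(1,2) a] and T1 = travel_time_has_integral[OF assms(3,4) a]
  have up: "1 / g u \<le> (1 + \<delta>) * (1 / g1 u)" and lo: "(1 - \<delta>) * (1 / g1 u) \<le> 1 / g u"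
    if "u \<in> {a..b}" for u
    using close[OF that] unfolding abs_le_iff by (simp_all add: add_divide_distrib diff_divide_distrib)
  have "travel_time g a b \<le> (1 + \<delta>) * travel_time g1 a b"
    by (rule has_integral_le[OF T has_integral_mult_right[OF T1]]) (use up in auto)
  moreover have "(1 - \<delta>) * travel_time g1 a b \<le> travel_time g a b"
    by (rule has_integral_le[OF has_integral_mult_right[OF T1] T]) (use lo in auto)
  ultimately show ?thesis by (simp add: abs_le_iff algebra_simps)
qed

section \<open>Flows whose ratio \<open>g(x)/x\<close> grows at logarithmic rate \<open>\<kappa>\<close>\<close>

text \<open>\<open>(x g'(x) - g(x)) / x\<close> is the derivative of \<open>g(x)/x\<close> with respect to \<open>ln x\<close>.\<close>
locale regular_flow =
  fixes g g' :: "real \<Rightarrow> real" and \<kappa> X0 :: real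
  assumes g_continuous: "continuous_on {1<..} g" and g_pos: "\<And>x. 1 < x \<Longrightarrow> 0 < g x"
    and q_mono: "mono_on {1<..} (\<lambda>x. g x / x)"
    and X0: "1 < X0"
    and deriv: "\<And>x. X0 \<le> x \<Longrightarrow> (g has_real_derivative g' x) (at x)"
    and rate_nonneg: "\<And>x. X0 \<le> x \<Longrightarrow> 0 \<le> x * g' x - g x"
    and rate_tendsto: "((\<lambda>x. (x * g' x - g x) / x) \<longlongrightarrow> \<kappa>) at_top"
begin

abbreviation q :: "real \<Rightarrow> real" where "q x \<equiv> g x / x"

lemma q_pos: "1 < x \<Longrightarrow> 0 < q x"
  using g_pos by simp

lemma q_ge_q2: "2 \<le> x \<Longrightarrow> q 2 \<le> q x"
  using mono_onD[OF q_mono, of 2 x] by auto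

lemma kappa_nonneg: "0 \<le> \<kappa>"
proof (rule tendsto_lowerbound[OF rate_tendsto])
  show "\<forall>\<^sub>F x in at_top. 0 \<le> (x * g' x - g x) / x"
    using eventually_ge_at_top[of X0] by eventually_elim (use rate_nonneg X0 in auto)
qed simp

lemma eventually_rate_close:
  assumes "0 < \<epsilon>"
  obtains X where "X0 \<le> X" "\<And>u. X \<le> u \<Longrightarrow> \<bar>(u * g' u - g u) / u - \<kappa>\<bar> \<le> \<epsilon>"
proof -
  have "\<forall>\<^sub>F u in at_top. dist ((u * g' u - g u) / u) \<kappa> < \<epsilon>"
    using rate_tendsto assms by (rule tendstoD)
  then obtain X where "\<And>u. X \<le> u \<Longrightarrow> dist ((u * g' u - g u) / u) \<kappa> < \<epsilon>"
    by (auto simp: eventually_at_top_linorder)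
  then show ?thesis
    by (intro that[of "max X X0"]) (auto simp: dist_real_def less_imp_le)
qed

lemma ln_q_diff_bounds:
  assumes X: "X0 \<le> X" "\<And>u. X \<le> u \<Longrightarrow> \<bar>(u * g' u - g u) / u - \<kappa>\<bar> \<le> \<epsilon>"
    and ab: "X \<le> a" "a \<le> b"
  shows "(\<kappa> - \<epsilon>) * travel_time g a b \<le> ln (q b) - ln (q a)"
    "ln (q b) - ln (q a) \<le> (\<kappa> + \<epsilon>) * travel_time g a b"
proof -
  have r: "\<kappa> - \<epsilon> \<le> (u * g' u - g u) / u \<and> (u * g' u - g u) / u \<le> \<kappa> + \<epsilon>" if "u \<in> {a..b}" for u
    using X(2)[of u] that ab by (auto simp: abs_le_iff)
  show "(\<kappa> - \<epsilon>) * travel_time g a b \<le> ln (q b) - ln (q a)"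
    "ln (q b) - ln (q a) \<le> (\<kappa> + \<epsilon>) * travel_time g a b"
    using ln_q_diff_travel_time_bounds[OF g_continuous g_pos X0 deriv _ _ r] X ab by auto
qed

text \<open>Were the travel time bounded by \<open>T\<close>, \<open>q\<close> would stay below \<open>C = q(X\<^sub>1) e\<^bsup>(\<kappa>+1)T\<^esup>\<close>, yet reaching
  \<open>X\<^sub>1 e\<^bsup>CT+1\<^esup>\<close> takes longer than \<open>T\<close>.\<close>
lemma unbounded: "travel_time_unbounded g"
  unfolding travel_time_unbounded_def
proof (intro allI impI)
  fix x T :: real assume x: "1 < x"
  show "\<exists>y\<ge>x. T \<le> travel_time g x y"
  proof (rule ccontr)
    assume "\<not> ?thesis"
    then have lt: "\<And>y. x \<le> y \<Longrightarrow> travel_time g x y < T" by force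
    have T: "0 < T" using lt[of x] by (simp add: travel_time_def)
    obtain X where X: "X0 \<le> X" "\<And>u. X \<le> u \<Longrightarrow> \<bar>(u * g' u - g u) / u - \<kappa>\<bar> \<le> 1"
      using eventually_rate_close[of 1] by auto
    define X1 where "X1 = max X x"
    have X1: "X \<le> X1" "x \<le> X1" "1 < X1" using X0 X x by (auto simp: X1_def)
    define C where "C = q X1 * exp ((\<kappa> + 1) * T)"
    have time: "travel_time g X1 y \<le> T" if "X1 \<le> y" for y
      using travel_time_add[OF g_continuous g_pos x X1(2) that] travel_time_nonneg[OF g_continuous g_pos x, of X1]
        lt[of y] that X1 by auto
    have q_le: "q y \<le> C" if y: "X1 \<le> y" for y
    proof -
      have "ln (q y) - ln (q X1) \<le> (\<kappa> + 1) * travel_time g X1 y"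
        using ln_q_diff_bounds(2)[OF X X1(1) y] .
      also have "\<dots> \<le> (\<kappa> + 1) * T" using time[OF y] kappa_nonneg by (intro mult_left_mono) auto
      finally have "exp (ln (q y)) \<le> exp (ln (q X1) + (\<kappa> + 1) * T)" by simp
      then show ?thesis using q_pos[of y] q_pos[of X1] y X1 by (simp add: C_def exp_add)
    qed
    have C: "0 < C" using g_pos[of X1] X1 by (simp add: C_def)
    define y where "y = X1 * exp (C * T + 1)"
    have y: "X1 \<le> y" using X1 C T by (simp add: y_def)
    have "C * T + 1 = ln y - ln X1" using X1 by (simp add: y_def ln_mult)
    also have "\<dots> \<le> q y * travel_time g X1 y"
      using ln_diff_travel_time_bounds(2)[OF g_continuous g_pos q_mono X1(3) y] .
    also have "\<dots> \<le> C * T"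
      using q_le[OF y] time[OF y] travel_time_nonneg[OF g_continuous g_pos X1(3), of y] C
      by (intro mult_mono) auto
    finally show False by simp
  qed
qed

lemma eventually_travel_time_ge:
  assumes x: "1 < x"
  obtains Y where "x \<le> Y" "\<And>y. Y \<le> y \<Longrightarrow> T \<le> travel_time g x y"
proof -
  obtain Y where Y: "x \<le> Y" "T \<le> travel_time g x Y"
    using unbounded x unfolding travel_time_unbounded_def by blast
  have "T \<le> travel_time g x y" if "Y \<le> y" for y
    using travel_time_add[OF g_continuous g_pos x Y(1) that] travel_time_nonneg[OF g_continuous g_pos, of Y y] Y x
    by auto
  then show ?thesis using Y that by blast
qed

lemma q_wfun_le:
  assumes X: "X0 \<le> X" "\<And>u. X \<le> u \<Longrightarrow> \<bar>(u * g' u - g u) / u - \<kappa>\<bar> \<le> 1"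
    and x: "X \<le> x" and t: "0 \<le> t"
  shows "q (wfun g x t) \<le> q x * exp ((\<kappa> + 1) * t)"
proof -
  have x1: "1 < x" using x X X0 by auto
  note w = wfun_ge_and_travel_time[OF g_continuous g_pos unbounded x1 t]
  have "ln (q (wfun g x t)) - ln (q x) \<le> (\<kappa> + 1) * t"
    using ln_q_diff_bounds(2)[OF X x w(1)] w(2) by simp
  then have "exp (ln (q (wfun g x t))) \<le> exp (ln (q x) + (\<kappa> + 1) * t)" by simp
  then show ?thesis using q_pos[of x] q_pos[of "wfun g x t"] x1 w(1) by (simp add: exp_add)
qed

lemma kappa_div_q_tendsto: "((\<lambda>x. \<kappa> / q x) \<longlongrightarrow> 0) at_top"
proof (cases "\<kappa> = 0")
  case False
  then have \<kappa>: "0 < \<kappa>" using kappa_nonneg by simp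
  obtain X where X: "X0 \<le> X" "\<And>u. X \<le> u \<Longrightarrow> \<bar>(u * g' u - g u) / u - \<kappa>\<bar> \<le> \<kappa> / 2"
    using eventually_rate_close[of "\<kappa> / 2"] \<kappa> by auto
  have X1: "1 < X" using X X0 by auto
  have "filterlim q at_top at_top"
    unfolding filterlim_at_top
  proof
    fix Z :: real
    obtain Y where Y: "X \<le> Y" "\<And>y. Y \<le> y \<Longrightarrow> 2 / \<kappa> * \<bar>ln (max Z 1) - ln (q X)\<bar> \<le> travel_time g X y"
      using eventually_travel_time_ge[OF X1] by blast
    show "\<forall>\<^sub>F y in at_top. Z \<le> q y"
      using eventually_ge_at_top[of Y]
    proof eventually_elim
      case (elim y)
      have "\<kappa> / 2 * travel_time g X y \<le> ln (q y) - ln (q X)"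
        using ln_q_diff_bounds(1)[OF X order_refl, of y] Y elim by auto
      moreover have "\<bar>ln (max Z 1) - ln (q X)\<bar> \<le> \<kappa> / 2 * travel_time g X y"
        using mult_left_mono[OF Y(2)[OF elim], of "\<kappa> / 2"] \<kappa> by simp
      ultimately have "ln (max Z 1) \<le> ln (q y)" by linarith
      then show ?case using q_pos[of y] Y elim X1 by (subst (asm) ln_le_cancel_iff) auto
    qed
  qed
  then show ?thesis by (intro tendsto_divide_0[OF tendsto_const] filterlim_at_top_imp_at_infinity)
qed simp

lemma wfun_pos: "1 \<le> x \<Longrightarrow> 0 \<le> t \<Longrightarrow> 0 < wfun g x t"
  using wfun_ge_and_travel_time(1)[OF g_continuous g_pos unbounded, of x t]
  by (cases "x = 1") (auto simp: wfun_def)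

lemma ln_q_wfun_tendsto:
  assumes t: "0 \<le> t"
  shows "((\<lambda>x. ln (q (wfun g x t)) - ln (q x)) \<longlongrightarrow> \<kappa> * t) at_top"
  unfolding tendsto_iff
proof (intro allI impI)
  fix \<eta> :: real assume \<eta>: "0 < \<eta>"
  define \<epsilon> where "\<epsilon> = \<eta> / (t + 1)"
  have \<epsilon>: "0 < \<epsilon>" "\<epsilon> * t < \<eta>"
    using \<eta> t by (auto simp: \<epsilon>_def field_simps)
  obtain X where X: "X0 \<le> X" "\<And>u. X \<le> u \<Longrightarrow> \<bar>(u * g' u - g u) / u - \<kappa>\<bar> \<le> \<epsilon>"
    using eventually_rate_close[OF \<epsilon>(1)] by blast
  show "\<forall>\<^sub>F x in at_top. dist (ln (q (wfun g x t)) - ln (q x)) (\<kappa> * t) < \<eta>"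
    using eventually_ge_at_top[of X]
  proof eventually_elim
    case (elim x)
    then have x: "1 < x" using X X0 by auto
    note w = wfun_ge_and_travel_time[OF g_continuous g_pos unbounded x t]
    have "\<bar>ln (q (wfun g x t)) - ln (q x) - \<kappa> * t\<bar> \<le> \<epsilon> * t"
      using ln_q_diff_bounds[OF X elim w(1)] w(2) by (simp add: abs_le_iff algebra_simps)
    then show ?case using \<epsilon> by (simp add: dist_real_def)
  qed
qed

lemma ln_q_scale_bounds:
  assumes X: "X0 \<le> X" "\<And>u. X \<le> u \<Longrightarrow> \<bar>(u * g' u - g u) / u - \<kappa>\<bar> \<le> \<epsilon>" and \<epsilon>: "0 \<le> \<epsilon>"
    and l: "1 \<le> l" and x: "X \<le> x" "2 \<le> x"
  shows "0 \<le> ln (q (l * x)) - ln (q x)"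
    "ln (q (l * x)) - ln (q x) \<le> \<kappa> / q x * ln l + \<epsilon> * ln l / q 2"
proof -
  have x1: "1 < x" and lx: "x \<le> l * x" using x l by auto
  define I where "I = travel_time g x (l * x)"
  have "q x * I \<le> ln l"
    using ln_diff_travel_time_bounds(1)[OF g_continuous g_pos q_mono x1 lx] l x1
    by (simp add: I_def ln_mult)
  then have I: "I \<le> ln l / q x"
    by (simp only: pos_le_divide_eq[OF q_pos[OF x1]] mult.commute)
  show "0 \<le> ln (q (l * x)) - ln (q x)"
    using mono_onD[OF q_mono, of x "l * x"] q_pos[OF x1] lx x1 by auto
  have "ln (q (l * x)) - ln (q x) \<le> (\<kappa> + \<epsilon>) * I"
    unfolding I_def by (rule ln_q_diff_bounds(2)[OF X x(1) lx])
  also have "\<dots> \<le> (\<kappa> + \<epsilon>) * (ln l / q x)"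
    using I kappa_nonneg \<epsilon> by (intro mult_left_mono) auto
  also have "\<dots> = \<kappa> / q x * ln l + \<epsilon> * ln l / q x" by (simp add: algebra_simps add_divide_distrib)
  also have "\<dots> \<le> \<kappa> / q x * ln l + \<epsilon> * ln l / q 2"
    using q_pos[of 2] q_pos[OF x1] \<epsilon> l
    by (intro add_left_mono divide_left_mono[OF q_ge_q2[OF x(2)]] mult_pos_pos mult_nonneg_nonneg) auto
  finally show "ln (q (l * x)) - ln (q x) \<le> \<kappa> / q x * ln l + \<epsilon> * ln l / q 2" .
qed

lemma ln_q_scale_tendsto:
  assumes l: "1 \<le> l"
  shows "((\<lambda>x. ln (q (l * x)) - ln (q x)) \<longlongrightarrow> 0) at_top"
  unfolding tendsto_iff
proof (intro allI impI)
  fix \<eta> :: real assume \<eta>: "0 < \<eta>"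
  have ln_l: "0 \<le> ln l" using l by simp
  have q2: "0 < q 2" using q_pos[of 2] by simp
  define \<epsilon> where "\<epsilon> = \<eta> / 2 * q 2 / (ln l + 1)"
  have \<epsilon>: "0 < \<epsilon>" using \<eta> q2 ln_l by (simp add: \<epsilon>_def)
  have "\<epsilon> * (ln l + 1) = \<eta> / 2 * q 2"
    using ln_l unfolding \<epsilon>_def by (simp add: field_simps add_nonneg_pos)
  then have "\<epsilon> * ln l < \<eta> / 2 * q 2"
    using \<epsilon> unfolding distrib_left mult_1_right by linarith
  then have \<epsilon>_small: "\<epsilon> * ln l / q 2 < \<eta> / 2"
    using q2 by (simp add: divide_less_eq)
  obtain X where X: "X0 \<le> X" "\<And>u. X \<le> u \<Longrightarrow> \<bar>(u * g' u - g u) / u - \<kappa>\<bar> \<le> \<epsilon>"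
    using eventually_rate_close[OF \<epsilon>] by blast
  have "((\<lambda>x. \<kappa> / q x * ln l) \<longlongrightarrow> 0 * ln l) at_top"
    by (intro tendsto_mult kappa_div_q_tendsto tendsto_const)
  then have "\<forall>\<^sub>F x in at_top. \<kappa> / q x * ln l < \<eta> / 2"
    using \<eta> by (intro order_tendstoD(2)) auto
  then show "\<forall>\<^sub>F x in at_top. dist (ln (q (l * x)) - ln (q x)) 0 < \<eta>"
    using eventually_ge_at_top[of "max X 2"]
  proof eventually_elim
    case (elim x)
    then have x: "X \<le> x" "2 \<le> x" by auto
    note bounds = ln_q_scale_bounds[OF X less_imp_le[OF \<epsilon>] l x]
    then have "ln (q (l * x)) - ln (q x) < \<eta>" using elim(1) \<epsilon>_small by linarith
    then show ?case using bounds(1) by (simp add: dist_real_def)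
  qed
qed

lemma ln_wfun_scale_bounds:
  assumes l: "1 \<le> l" and t: "0 \<le> t" and x: "1 < x"
  shows "ln l * (q (wfun g x t) / q (l * x)) \<le> ln (wfun g (l * x) t) - ln (wfun g x t)"
    "ln (wfun g (l * x) t) - ln (wfun g x t) \<le> ln l * (q (wfun g (l * x) t) / q x)"
proof -
  have lx: "x \<le> l * x" using l x by simp
  then have lx1: "1 < l * x" using x by linarith
  define A where "A = wfun g x t"
  define B where "B = wfun g (l * x) t"
  define I where "I = travel_time g x (l * x)"
  have A: "1 < A" using wfun_ge_and_travel_time(1)[OF g_continuous g_pos unbounded x t] x by (simp add: A_def)
  have B: "1 < B" using wfun_ge_and_travel_time(1)[OF g_continuous g_pos unbounded lx1 t] lx1 by (simp add: B_def)
  have "q x * I \<le> ln l" "ln l \<le> q (l * x) * I"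
    using ln_diff_travel_time_bounds[OF g_continuous g_pos q_mono x lx] l x by (simp_all add: I_def ln_mult)
  then have I: "ln l / q (l * x) \<le> I" "I \<le> ln l / q x"
    by (simp_all only: pos_divide_le_eq[OF q_pos[OF lx1]] pos_le_divide_eq[OF q_pos[OF x]] mult.commute)
  have J: "q A * I \<le> ln B - ln A" "ln B - ln A \<le> q B * I"
    using ln_diff_travel_time_bounds[OF g_continuous g_pos q_mono A]
      wfun_mono_and_travel_time[OF g_continuous g_pos unbounded x lx t]
    by (simp_all add: A_def B_def I_def)
  have "ln l * (q A / q (l * x)) = q A * (ln l / q (l * x))" by simp
  also have "\<dots> \<le> q A * I" using I(1) q_pos[OF A] by (intro mult_left_mono) auto
  finally show "ln l * (q (wfun g x t) / q (l * x)) \<le> ln (wfun g (l * x) t) - ln (wfun g x t)"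
    using J(1) by (simp add: A_def B_def)
  have "q B * I \<le> q B * (ln l / q x)" using I(2) q_pos[OF B] by (intro mult_left_mono) auto
  also have "\<dots> = ln l * (q B / q x)" by simp
  finally show "ln (wfun g (l * x) t) - ln (wfun g x t) \<le> ln l * (q (wfun g (l * x) t) / q x)"
    using J(2) by (simp add: A_def B_def)
qed

lemma q_wfun_ratios_tendsto:
  assumes l: "1 \<le> l" and t: "0 \<le> t"
  shows "((\<lambda>x. q (wfun g x t) / q (l * x)) \<longlongrightarrow> exp (\<kappa> * t)) at_top"
    "((\<lambda>x. q (wfun g (l * x) t) / q x) \<longlongrightarrow> exp (\<kappa> * t)) at_top"
proof -
  have scale: "filterlim (\<lambda>x. l * x) at_top at_top"
    using filterlim_tendsto_pos_mult_at_top[OF tendsto_const _ filterlim_ident, of l] l by simp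
  note lim_x = ln_q_wfun_tendsto[OF t] and lim_lx = filterlim_compose[OF ln_q_wfun_tendsto[OF t] scale]
    and lim_l = ln_q_scale_tendsto[OF l]
  have "\<forall>\<^sub>F x in at_top. 1 < x \<and> 1 < l * x \<and> 1 < wfun g x t \<and> 1 < wfun g (l * x) t"
    using eventually_gt_at_top[of 1]
  proof eventually_elim
    case (elim x)
    have "x \<le> l * x" using elim l by simp
    then have "1 < l * x" using elim by linarith
    then show ?case
      using wfun_ge_and_travel_time(1)[OF g_continuous g_pos unbounded _ t] elim by force
  qed
  then have pos: "\<forall>\<^sub>F x in at_top. 0 < q (wfun g x t) \<and> 0 < q (l * x)"
    "\<forall>\<^sub>F x in at_top. 0 < q (wfun g (l * x) t) \<and> 0 < q x"
    by (auto elim!: eventually_mono simp: q_pos)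
  have "((\<lambda>x. (ln (q (wfun g x t)) - ln (q x)) - (ln (q (l * x)) - ln (q x))) \<longlongrightarrow> \<kappa> * t - 0) at_top"
    by (intro tendsto_intros lim_x lim_l)
  then show "((\<lambda>x. q (wfun g x t) / q (l * x)) \<longlongrightarrow> exp (\<kappa> * t)) at_top"
    using tendsto_divide_exp_of_ln_diff[OF pos(1)] by simp
  have "((\<lambda>x. (ln (q (wfun g (l * x) t)) - ln (q (l * x))) + (ln (q (l * x)) - ln (q x))) \<longlongrightarrow> \<kappa> * t + 0) at_top"
    using lim_lx by (intro tendsto_intros lim_l) (simp add: comp_def)
  then show "((\<lambda>x. q (wfun g (l * x) t) / q x) \<longlongrightarrow> exp (\<kappa> * t)) at_top"
    using tendsto_divide_exp_of_ln_diff[OF pos(2)] by simp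
qed

lemma ln_wfun_scale_tendsto:
  assumes l: "1 \<le> l" and t: "0 \<le> t"
  shows "((\<lambda>x. ln (wfun g (l * x) t) - ln (wfun g x t)) \<longlongrightarrow> exp (\<kappa> * t) * ln l) at_top"
proof (rule tendsto_sandwich)
  show "((\<lambda>x. ln l * (q (wfun g x t) / q (l * x))) \<longlongrightarrow> exp (\<kappa> * t) * ln l) at_top"
    "((\<lambda>x. ln l * (q (wfun g (l * x) t) / q x)) \<longlongrightarrow> exp (\<kappa> * t) * ln l) at_top"
    using tendsto_mult_left[OF q_wfun_ratios_tendsto(1)[OF l t], of "ln l"]
      tendsto_mult_left[OF q_wfun_ratios_tendsto(2)[OF l t], of "ln l"]
    by (simp_all add: mult.commute)
  show "\<forall>\<^sub>F x in at_top. ln l * (q (wfun g x t) / q (l * x)) \<le> ln (wfun g (l * x) t) - ln (wfun g x t)"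
    using eventually_gt_at_top[of 1] by eventually_elim (rule ln_wfun_scale_bounds(1)[OF l t])
  show "\<forall>\<^sub>F x in at_top. ln (wfun g (l * x) t) - ln (wfun g x t) \<le> ln l * (q (wfun g (l * x) t) / q x)"
    using eventually_gt_at_top[of 1] by eventually_elim (rule ln_wfun_scale_bounds(2)[OF l t])
qed

lemma mono_wfun_max_one:
  assumes t: "0 \<le> t"
  shows "mono (\<lambda>x. wfun g (max x 1) t)"
proof (rule monoI)
  fix a b :: real assume ab: "a \<le> b"
  show "wfun g (max a 1) t \<le> wfun g (max b 1) t"
  proof (cases "1 < max a 1")
    case True
    then show ?thesis
      using wfun_mono_and_travel_time(1)[OF g_continuous g_pos unbounded True _ t, of "max b 1"] ab by simp
  next
    case False
    then have "max a 1 = 1" by simp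
    then have "wfun g (max a 1) t = 1" by (simp add: wfun_def)
    moreover have "1 \<le> wfun g (max b 1) t"
      using wfun_ge_and_travel_time(1)[OF g_continuous g_pos unbounded, of "max b 1" t] t
      by (cases "b \<le> 1") (auto simp: wfun_def max_def)
    ultimately show ?thesis by simp
  qed
qed

text \<open>For \<open>l < 1\<close> the slow variation of \<open>L\<close> follows from that for \<open>1/l\<close> by inversion.\<close>
lemma wfun_eq_powr_slowly_varying:
  assumes t: "0 \<le> t"
  shows "\<exists>L. slowly_varying L \<and> (\<forall>x\<ge>1. wfun g x t = x powr (exp (\<kappa> * t)) * L x)"
proof -
  define c where "c = exp (\<kappa> * t)"
  define L where "L x = wfun g x t / x powr c" for x
  have measurable: "set_borel_measurable borel {1..} L"
  proof -
    have "(\<lambda>x. indicator {1..} x *\<^sub>R (wfun g (max x 1) t / x powr c)) \<in> borel_measurable borel"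
      using borel_measurable_mono[OF mono_wfun_max_one[OF t]] by measurable
    moreover have "(\<lambda>x. indicator {1..} x *\<^sub>R (wfun g (max x 1) t / x powr c)) = (\<lambda>x. indicator {1..} x *\<^sub>R L x)"
      by (auto simp: fun_eq_iff L_def indicator_def max_def)
    ultimately show ?thesis unfolding set_borel_measurable_def by simp
  qed
  have scale_ge_one: "((\<lambda>x. L (l * x) / L x) \<longlongrightarrow> 1) at_top" if l: "1 \<le> l" for l
  proof -
    have "((\<lambda>x. exp (ln (wfun g (l * x) t) - ln (wfun g x t)) / l powr c) \<longlongrightarrow> exp (c * ln l) / l powr c) at_top"
      using ln_wfun_scale_tendsto[OF l t] l by (intro tendsto_intros) (simp_all add: c_def)
    moreover have "exp (c * ln l) / l powr c = 1" using l by (simp add: powr_def)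
    moreover have "\<forall>\<^sub>F x in at_top. exp (ln (wfun g (l * x) t) - ln (wfun g x t)) / l powr c = L (l * x) / L x"
      using eventually_ge_at_top[of 1]
    proof eventually_elim
      case (elim x)
      have "1 \<le> l * x" using l elim mult_mono[of 1 l 1 x] by simp
      then have "0 < wfun g (l * x) t" "0 < wfun g x t" using wfun_pos elim t by auto
      then show ?case using l elim by (simp add: L_def exp_diff powr_mult field_simps)
    qed
    ultimately show ?thesis by (simp add: tendsto_cong)
  qed
  have "((\<lambda>x. L (l * x) / L x) \<longlongrightarrow> 1) at_top" if l: "0 < l" for l
  proof (cases "1 \<le> l")
    case False
    then have l1: "1 \<le> 1 / l" using l by (simp add: field_simps)
    have "filterlim (\<lambda>x. l * x) at_top at_top"
      by (rule filterlim_tendsto_pos_mult_at_top[OF tendsto_const l filterlim_ident])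
    from filterlim_compose[OF scale_ge_one[OF l1] this]
    have "((\<lambda>x. inverse (L (1 / l * (l * x)) / L (l * x))) \<longlongrightarrow> inverse 1) at_top"
      by (rule tendsto_inverse) simp
    then show ?thesis using l by (simp add: field_simps)
  qed (use scale_ge_one in simp)
  moreover have "\<forall>x\<ge>1. 0 < L x" using wfun_pos t by (simp add: L_def)
  ultimately show ?thesis
    by (intro exI[of _ L] conjI) (auto simp: slowly_varying_def measurable L_def c_def)
qed

lemma travel_time_unbounded_of_close:
  fixes g1 :: "real \<Rightarrow> real"
  assumes g1_continuous: "continuous_on {1<..} g1" and g1_pos: "\<And>x. 1 < x \<Longrightarrow> 0 < g1 x"
    and close: "((\<lambda>x. (g x - g1 x) / x) \<longlongrightarrow> 0) at_top"
  shows "travel_time_unbounded g1"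
  unfolding travel_time_unbounded_def
proof (intro allI impI)
  fix x T :: real assume x: "1 < x"
  define c where "c = q 2"
  have "\<forall>\<^sub>F u in at_top. dist ((g u - g1 u) / u) 0 < c" unfolding c_def by (rule tendstoD[OF close q_pos]) simp
  then obtain X' where X': "\<And>u. X' \<le> u \<Longrightarrow> \<bar>(g u - g1 u) / u\<bar> < c"
    by (auto simp: eventually_at_top_linorder)
  define X1 where "X1 = max (max X' x) 2"
  have X1: "X' \<le> X1" "x \<le> X1" "2 \<le> X1" "1 < X1" by (auto simp: X1_def)
  \<comment> \<open>beyond \<open>X1\<close>, \<open>g1 < g + q(2) u \<le> 2 g\<close>\<close>
  have compare: "1 / 2 * (1 / g u) \<le> 1 / g1 u" if u: "u \<in> {X1..Y}" for u Y
  proof -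
    have u1: "1 < u" "2 \<le> u" "X' \<le> u" using u X1 by auto
    have "\<bar>g u - g1 u\<bar> < c * u" using X'[OF u1(3)] u1 by (simp add: abs_divide divide_less_eq)
    moreover have "c * u \<le> g u" using mult_right_mono[OF q_ge_q2[OF u1(2)], of u] u1 by (simp add: c_def)
    ultimately have "g1 u \<le> 2 * g u" by linarith
    then show ?thesis using g1_pos[OF u1(1)] g_pos[OF u1(1)] by (simp add: field_simps)
  qed
  obtain Y where Y: "X1 \<le> Y" "\<And>y. Y \<le> y \<Longrightarrow> 2 * max T 0 \<le> travel_time g X1 y"
    using eventually_travel_time_ge[OF X1(4)] by blast
  have "1 / 2 * travel_time g X1 Y \<le> travel_time g1 X1 Y"
    by (rule has_integral_le[OF has_integral_mult_right[OF travel_time_has_integral[OF g_continuous g_pos X1(4)]]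
          travel_time_has_integral[OF g1_continuous g1_pos X1(4)]])
       (use compare in auto)
  moreover have "travel_time g1 x X1 + travel_time g1 X1 Y = travel_time g1 x Y"
    by (rule travel_time_add[OF g1_continuous g1_pos x X1(2) Y(1)])
  moreover have "0 \<le> travel_time g1 x X1" by (rule travel_time_nonneg[OF g1_continuous g1_pos x])
  ultimately have "T \<le> travel_time g1 x Y" using Y(2)[of Y] by auto
  then show "\<exists>y\<ge>x. T \<le> travel_time g1 x y" using Y X1 by (intro exI[of _ Y]) auto
qed

lemma ln_wfun_diff_le:
  assumes X: "X0 \<le> X" "\<And>u. X \<le> u \<Longrightarrow> \<bar>(u * g' u - g u) / u - \<kappa>\<bar> \<le> 1"
    and x: "X \<le> x" and s: "0 \<le> s1" "s1 \<le> s2" "s2 \<le> T"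
  shows "0 \<le> ln (wfun g x s2) - ln (wfun g x s1)"
    "ln (wfun g x s2) - ln (wfun g x s1) \<le> q x * exp ((\<kappa> + 1) * T) * (s2 - s1)"
proof -
  have x1: "1 < x" using x X X0 by auto
  note m = wfun_mono_time[OF g_continuous g_pos unbounded x1 s(1,2)]
  have w1: "1 < wfun g x s1" using wfun_ge_and_travel_time(1)[OF g_continuous g_pos unbounded x1 s(1)] x1 by simp
  then show "0 \<le> ln (wfun g x s2) - ln (wfun g x s1)" using m(1) by simp
  have "ln (wfun g x s2) - ln (wfun g x s1) \<le> q (wfun g x s2) * (s2 - s1)"
    using ln_diff_travel_time_bounds(2)[OF g_continuous g_pos q_mono w1 m(1)] m(2) by simp
  also have "\<dots> \<le> q x * exp ((\<kappa> + 1) * T) * (s2 - s1)"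
  proof (rule mult_right_mono)
    have "q (wfun g x s2) \<le> q x * exp ((\<kappa> + 1) * s2)"
      using q_wfun_le[OF X x] s by simp
    also have "\<dots> \<le> q x * exp ((\<kappa> + 1) * T)"
      using s kappa_nonneg q_pos[OF x1] by (intro mult_left_mono) (auto intro!: mult_left_mono)
    finally show "q (wfun g x s2) \<le> q x * exp ((\<kappa> + 1) * T)" .
  qed (use s in simp)
  finally show "ln (wfun g x s2) - ln (wfun g x s1) \<le> q x * exp ((\<kappa> + 1) * T) * (s2 - s1)" .
qed

lemma inverse_relative_error_le:
  assumes x: "1 < x" "x \<le> u" and g1u: "0 < g1 u" and close: "\<bar>g u - g1 u\<bar> \<le> e * u"
  shows "\<bar>1 / g u - 1 / g1 u\<bar> \<le> e / q x * (1 / g1 u)"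
proof -
  have u: "1 < u" "0 < g u" using x g_pos[of u] by auto
  have e: "0 \<le> e" using close u by (smt (verit) zero_le_mult_iff abs_ge_zero)
  have "\<bar>1 / g u - 1 / g1 u\<bar> = \<bar>g u - g1 u\<bar> / (g u * g1 u)"
    using u g1u by (simp add: field_simps abs_minus_commute abs_divide abs_mult)
  also have "\<dots> \<le> e * u / (g u * g1 u)" using close u g1u by (intro divide_right_mono) auto
  also have "\<dots> = e / q u * (1 / g1 u)" using u g1u by (simp add: field_simps)
  also have "\<dots> \<le> e / q x * (1 / g1 u)"
    using mono_onD[OF q_mono, of x u] q_pos[of x] q_pos[of u] x u e g1u
    by (intro mult_right_mono divide_left_mono mult_pos_pos) auto
  finally show ?thesis .
qed

lemma q_mult_travel_time_error_tendsto:
  fixes g1 :: "real \<Rightarrow> real"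
  assumes g1_continuous: "continuous_on {1<..} g1" and g1_pos: "\<And>x. 1 < x \<Longrightarrow> 0 < g1 x"
    and close: "((\<lambda>x. (g x - g1 x) / x) \<longlongrightarrow> 0) at_top" and t: "0 \<le> t"
  shows "((\<lambda>x. q x * \<bar>travel_time g x (wfun g1 x t) - t\<bar>) \<longlongrightarrow> 0) at_top"
  unfolding tendsto_iff
proof (intro allI impI)
  fix \<eta> :: real assume \<eta>: "0 < \<eta>"
  note unbounded1 = travel_time_unbounded_of_close[OF g1_continuous g1_pos close]
  define e where "e = \<eta> / (t + 1)"
  have e: "0 < e" "e * t < \<eta>" using \<eta> t by (auto simp: e_def field_simps)
  have "\<forall>\<^sub>F u in at_top. dist ((g u - g1 u) / u) 0 < e" by (rule tendstoD[OF close e(1)])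
  then obtain X where X: "\<And>u. X \<le> u \<Longrightarrow> \<bar>(g u - g1 u) / u\<bar> < e"
    by (auto simp: eventually_at_top_linorder)
  show "\<forall>\<^sub>F x in at_top. dist (q x * \<bar>travel_time g x (wfun g1 x t) - t\<bar>) 0 < \<eta>"
    using eventually_ge_at_top[of "max X 2"]
  proof eventually_elim
    case (elim x)
    then have x: "X \<le> x" "1 < x" by auto
    note w1 = wfun_ge_and_travel_time[OF g1_continuous g1_pos unbounded1 x(2) t]
    have rel: "\<bar>1 / g u - 1 / g1 u\<bar> \<le> e / q x * (1 / g1 u)" if u: "u \<in> {x..wfun g1 x t}" for u
    proof (rule inverse_relative_error_le)
      show "\<bar>g u - g1 u\<bar> \<le> e * u" using X[of u] u x by (simp add: abs_divide divide_less_eq)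
    qed (use u x g1_pos[of u] in auto)
    have "\<bar>travel_time g x (wfun g1 x t) - t\<bar> \<le> e / q x * t"
      using abs_travel_time_diff_le[where b="wfun g1 x t", OF g_continuous g_pos g1_continuous g1_pos x(2) rel]
        w1(2) by simp
    then have "q x * \<bar>travel_time g x (wfun g1 x t) - t\<bar> \<le> q x * (e / q x * t)"
      using q_pos[OF x(2)] by (intro mult_left_mono) auto
    also have "\<dots> = e * t" using g_pos[of x] x by (simp add: field_simps)
    finally have "q x * \<bar>travel_time g x (wfun g1 x t) - t\<bar> < \<eta>" using e by linarith
    moreover have "0 \<le> q x * \<bar>travel_time g x (wfun g1 x t) - t\<bar>"
      using q_pos[OF x(2)] by (intro mult_nonneg_nonneg) auto
    ultimately show ?case by (simp only: dist_real_def diff_zero abs_of_nonneg)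
  qed
qed

text \<open>Only the monotonicity of \<open>g(x)/x\<close> is needed, so the hypothesis of part (iii) that \<open>g\<^sub>1(x)/x\<close>
  be nondecreasing when \<open>\<kappa> = 0\<close> goes unused.\<close>
lemma wfun_asymp_equiv_of_close:
  fixes g1 :: "real \<Rightarrow> real"
  assumes g1_continuous: "continuous_on {1<..} g1" and g1_pos: "\<And>x. 1 < x \<Longrightarrow> 0 < g1 x"
    and close: "((\<lambda>x. (g x - g1 x) / x) \<longlongrightarrow> 0) at_top" and t: "0 \<le> t"
  shows "(\<lambda>x. wfun g x t) \<sim>[at_top] (\<lambda>x. wfun g1 x t)"
proof (rule asymp_equiv_of_ln_diff_tendsto)
  note unbounded1 = travel_time_unbounded_of_close[OF g1_continuous g1_pos close]
  define S where "S x = travel_time g x (wfun g1 x t)" for x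
  have error: "((\<lambda>x. q x * \<bar>S x - t\<bar>) \<longlongrightarrow> 0) at_top"
    unfolding S_def by (rule q_mult_travel_time_error_tendsto[OF g1_continuous g1_pos close t])
  define K where "K = exp ((\<kappa> + 1) * (t + 1))"
  obtain X where X: "X0 \<le> X" "\<And>u. X \<le> u \<Longrightarrow> \<bar>(u * g' u - g u) / u - \<kappa>\<bar> \<le> 1"
    using eventually_rate_close[of 1] by auto
  have "\<forall>\<^sub>F x in at_top. q x * \<bar>S x - t\<bar> < q 2"
    by (rule order_tendstoD(2)[OF error q_pos]) simp
  then have "\<forall>\<^sub>F x in at_top. norm (ln (wfun g x t) - ln (wfun g1 x t)) \<le> K * (q x * \<bar>S x - t\<bar>)"
    using eventually_ge_at_top[of "max X 2"]
  proof eventually_elim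
    case (elim x)
    then have x: "X \<le> x" "2 \<le> x" "1 < x" by auto
    note w1 = wfun_ge_and_travel_time[OF g1_continuous g1_pos unbounded1 x(3) t]
    have w1_eq: "wfun g1 x t = wfun g x (S x)"
      using wfun_eqI[OF g_continuous g_pos unbounded x(3) w1(1)] by (simp add: S_def)
    have S: "0 \<le> S x" unfolding S_def by (rule travel_time_nonneg[OF g_continuous g_pos x(3)])
    have "q 2 * \<bar>S x - t\<bar> < q 2" using elim(1) q_ge_q2[OF x(2)] by (smt (verit) abs_ge_zero mult_right_mono)
    then have "\<bar>S x - t\<bar> < 1" using q_pos[of 2] by simp
    then have "S x \<le> t + 1" "t \<le> t + 1" using t by auto
    then show ?case
      using ln_wfun_diff_le[OF X x(1) S, of t "t + 1"] ln_wfun_diff_le[OF X x(1) t, of "S x" "t + 1"]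
      unfolding w1_eq K_def by (cases "S x \<le> t") (auto simp: abs_le_iff algebra_simps)
  qed
  then show "((\<lambda>x. ln (wfun g x t) - ln (wfun g1 x t)) \<longlongrightarrow> 0) at_top"
    by (rule Lim_null_comparison) (use tendsto_mult_right_zero[OF error] in simp)
  show "\<forall>\<^sub>F x in at_top. 0 < wfun g x t \<and> 0 < wfun g1 x t"
    using eventually_gt_at_top[of 1]
  proof eventually_elim
    case (elim x)
    then show ?case
      using wfun_pos[of x t] wfun_ge_and_travel_time(1)[OF g1_continuous g1_pos unbounded1 elim t] t by auto
  qed
qed

end

section \<open>The flow of \<open>\<gamma>\<close>\<close>

lemma regular_flow_gamma:
  assumes finite: "finite_measure Xi" and sets_Xi: "sets Xi = sets (restrict_space borel Delta)"
    and nonzero: "emeasure Xi Delta \<noteq> 0"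
    and lim: "((\<lambda>x. x * deriv (deriv (gamma Xi)) x) \<longlongrightarrow> \<kappa>) at_top"
  shows "regular_flow (gamma Xi) (gamma_d1 Xi) \<kappa> 3"
proof
  show "continuous_on {1<..} (gamma Xi)" by (rule gamma_continuous_on[OF finite sets_Xi])
  show "mono_on {1<..} (\<lambda>x. gamma Xi x / x)" by (rule mono_on_gamma_div[OF finite sets_Xi])
  show "((\<lambda>x. (x * gamma_d1 Xi x - gamma Xi x) / x) \<longlongrightarrow> \<kappa>) at_top"
    by (rule gamma_rate_tendsto[OF finite sets_Xi lim])
qed (use gamma_pos[OF finite sets_Xi nonzero] gamma_has_real_derivative[OF finite sets_Xi]
        gamma_le_mult_gamma_d1[OF finite sets_Xi] in auto)

theorem mainTheorem8:
  fixes Xi :: "(nat \<Rightarrow> real) measure"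
  assumes fin: "finite_measure Xi"
    and sets: "sets Xi = sets (restrict_space borel Delta)"
    and nonzero: "emeasure Xi Delta \<noteq> 0"
  shows
   "(atom0 Xi = 0 \<and> mu Xi < \<infinity> \<longrightarrow>
       (\<forall>t\<ge>0. (\<lambda>x. wfun (gamma Xi) x t) \<sim>[at_top] (\<lambda>x. x * exp (enn2real (mu Xi) * t))))
    \<and> (\<forall>\<kappa>. ((\<lambda>x. x * deriv (deriv (gamma Xi)) x) \<longlongrightarrow> \<kappa>) at_top \<longrightarrow>
         (\<forall>t\<ge>0. \<exists>L. slowly_varying L \<and>
             (\<forall>x\<ge>1. wfun (gamma Xi) x t = x powr (exp (\<kappa> * t)) * L x)))
    \<and> (\<forall>\<kappa> (g1 :: real \<Rightarrow> real).
         ((\<lambda>x. x * deriv (deriv (gamma Xi)) x) \<longlongrightarrow> \<kappa>) at_top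
         \<and> continuous_on {1<..} g1 \<and> (\<forall>x>1. 0 < g1 x)
         \<and> ((\<lambda>x. (gamma Xi x - g1 x) / x) \<longlongrightarrow> 0) at_top \<longrightarrow>
         (\<forall>t\<ge>0. \<forall>x>1. \<exists>!y. x \<le> y \<and> ((\<lambda>u. 1 / g1 u) has_integral t) {x..y})
         \<and> ((\<kappa> = 0 \<longrightarrow> mono_on {1<..} (\<lambda>x. g1 x / x)) \<longrightarrow>
             (\<forall>t\<ge>0. (\<lambda>x. wfun (gamma Xi) x t) \<sim>[at_top] (\<lambda>x. wfun g1 x t))))"
proof (intro conjI allI impI)
  fix t :: real assume "atom0 Xi = 0 \<and> mu Xi < \<infinity>" and t: "0 \<le> t"
  then show "(\<lambda>x. wfun (gamma Xi) x t) \<sim>[at_top] (\<lambda>x. x * exp (enn2real (mu Xi) * t))"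
    using wfun_asymp_equiv_linear[OF gamma_continuous_on[OF fin sets] gamma_pos[OF fin sets nonzero]
        mono_on_gamma_div[OF fin sets] gamma_div_tendsto_mu[OF fin sets] t]
    by blast
next
  fix \<kappa> t :: real
  assume "((\<lambda>x. x * deriv (deriv (gamma Xi)) x) \<longlongrightarrow> \<kappa>) at_top" and t: "0 \<le> t"
  then interpret regular_flow "gamma Xi" "gamma_d1 Xi" \<kappa> 3
    by (intro regular_flow_gamma[OF fin sets nonzero])
  show "\<exists>L. slowly_varying L \<and> (\<forall>x\<ge>1. wfun (gamma Xi) x t = x powr (exp (\<kappa> * t)) * L x)"
    by (rule wfun_eq_powr_slowly_varying[OF t])
next
  fix \<kappa> :: real and g1 :: "real \<Rightarrow> real"
  assume "((\<lambda>x. x * deriv (deriv (gamma Xi)) x) \<longlongrightarrow> \<kappa>) at_top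
    \<and> continuous_on {1<..} g1 \<and> (\<forall>x>1. 0 < g1 x) \<and> ((\<lambda>x. (gamma Xi x - g1 x) / x) \<longlongrightarrow> 0) at_top"
  then have lim: "((\<lambda>x. x * deriv (deriv (gamma Xi)) x) \<longlongrightarrow> \<kappa>) at_top"
    and g1: "continuous_on {1<..} g1" "\<And>x. 1 < x \<Longrightarrow> 0 < g1 x"
    and close: "((\<lambda>x. (gamma Xi x - g1 x) / x) \<longlongrightarrow> 0) at_top" by auto
  interpret regular_flow "gamma Xi" "gamma_d1 Xi" \<kappa> 3
    by (rule regular_flow_gamma[OF fin sets nonzero lim])
  show "\<exists>!y. x \<le> y \<and> ((\<lambda>u. 1 / g1 u) has_integral t) {x..y}" if "0 \<le> t" "1 < x" for t x
    using wfun_ex1[OF g1 travel_time_unbounded_of_close[OF g1 close]] that by blast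
  show "(\<lambda>x. wfun (gamma Xi) x t) \<sim>[at_top] (\<lambda>x. wfun g1 x t)" if "0 \<le> t" for t
    using wfun_asymp_equiv_of_close[OF g1 close that] .
qed

end
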